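(* Let $\sigma>0$, $\Omega=[-1,1]^n$, $K(x,y)=e^{-\sigma^2\|x-y\|^2}$, and let $\{\lambda_i\}$ be the eigenvalues (nonincreasing, with multiplicity) of $T[\phi](x)=\int_\Omega K(x,y)\phi(y)\,dy$ on $L_2(\Omega)$ (Lebesgue measure). Then for every fixed $\theta\in(0,\frac12)$, $$\mathcal{E}(\varepsilon,\{\lambda_i\}_{i=1}^\infty)+m_{(1-\theta)\varepsilon}\ln\frac{3}{\theta}=O\Big(\frac{\ln^{n+1}(1/\varepsilon)}{(\ln\ln(1/\varepsilon))^n}\Big)\quad(\varepsilon\to0^+),$$ and consequently $\mathcal{H}(\varepsilon,B_{\mathcal{H}_K},C(\Omega))=O\Big(\frac{\ln^{n+1}(1/\varepsilon)}{(\ln\ln(1/\varepsilon))^n}\Big)$.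
   Context: $\mathcal{E}(\varepsilon,\{\lambda_i\}_{i=1}^\infty)=\sum_{i:\lambda_i>\varepsilon}\ln(\lambda_i/\varepsilon)$ and $m_\varepsilon=|\{i:\lambda_i>\varepsilon\}|$. $\mathcal{H}_K$ is the RKHS of $K$, $B_{\mathcal{H}_K}$ its open unit ball viewed in $C(\Omega)$ with sup norm, and $\mathcal{H}(\varepsilon,A,X)$ is the natural log of the minimal number of balls $c+\varepsilon B_X$, $c\in X$, covering $A$. *)

theory Defs
  imports "HOL-Analysis.Analysis"
begin

definition cube :: "(real^'n) set" where
  "cube = {x. \<forall>i. - 1 \<le> x $ i \<and> x $ i \<le> 1}"

definition gaussK :: "real \<Rightarrow> real^'n \<Rightarrow> real^'n \<Rightarrow> real" where
  "gaussK \<sigma> x y = exp (- (\<sigma>\<^sup>2) * (norm (x - y))\<^sup>2)"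

definition intop :: "(real^'n \<Rightarrow> real^'n \<Rightarrow> real) \<Rightarrow> (real^'n) set
                     \<Rightarrow> (real^'n \<Rightarrow> real) \<Rightarrow> real^'n \<Rightarrow> real" where
  "intop K \<Omega> \<phi> x = (LINT y | lebesgue_on \<Omega>. K x y * \<phi> y)"

definition L2_on :: "(real^'n) set \<Rightarrow> (real^'n \<Rightarrow> real) \<Rightarrow> bool" where
  "L2_on \<Omega> \<phi> \<longleftrightarrow> \<phi> \<in> borel_measurable (lebesgue_on \<Omega>)
                  \<and> integrable (lebesgue_on \<Omega>) (\<lambda>x. (\<phi> x)\<^sup>2)"

definition has_k_orth_eigenfuns ::
  "(real^'n \<Rightarrow> real^'n \<Rightarrow> real) \<Rightarrow> (real^'n) set \<Rightarrow> real \<Rightarrow> nat \<Rightarrow> bool" where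
  "has_k_orth_eigenfuns K \<Omega> \<mu> k \<longleftrightarrow>
     (\<exists>\<phi> :: nat \<Rightarrow> real^'n \<Rightarrow> real.
        (\<forall>j<k. L2_on \<Omega> (\<phi> j)
               \<and> (AE x in lebesgue_on \<Omega>. intop K \<Omega> (\<phi> j) x = \<mu> * \<phi> j x))
      \<and> (\<forall>j<k. \<forall>l<k. (LINT x | lebesgue_on \<Omega>. \<phi> j x * \<phi> l x)
                        = (if j = l then 1 else 0)))"

text \<open>lam is the sequence of (positive) eigenvalues of T, nonincreasing and repeated
  according to multiplicity (padded with zeros if there are only finitely many).\<close>
definition eigenvalue_seq ::
  "(real^'n \<Rightarrow> real^'n \<Rightarrow> real) \<Rightarrow> (real^'n) set \<Rightarrow> (nat \<Rightarrow> real) \<Rightarrow> bool" where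
  "eigenvalue_seq K \<Omega> lam \<longleftrightarrow>
     antimono lam \<and> (\<forall>i. lam i \<ge> 0) \<and>
     (\<forall>\<mu>>0. finite {i. lam i = \<mu>} \<and>
            (\<forall>k. has_k_orth_eigenfuns K \<Omega> \<mu> k \<longleftrightarrow> k \<le> card {i. lam i = \<mu>}))"

definition Ecal :: "real \<Rightarrow> (nat \<Rightarrow> real) \<Rightarrow> real" where
  "Ecal \<epsilon> lam = (\<Sum>i\<in>{i. lam i > \<epsilon>}. ln (lam i / \<epsilon>))"

definition mcount :: "real \<Rightarrow> (nat \<Rightarrow> real) \<Rightarrow> nat" where
  "mcount \<epsilon> lam = card {i. lam i > \<epsilon>}"

text \<open>RKHS via the Moore-Aronszajn construction. A finite combination
  sum_j c_j K(., x_j) is represented by a list of pairs (c_j, x_j).\<close>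
definition kev :: "(real^'n \<Rightarrow> real^'n \<Rightarrow> real) \<Rightarrow> (real \<times> (real^'n)) list \<Rightarrow> real^'n \<Rightarrow> real" where
  "kev K ps z = sum_list (map (\<lambda>(c, x). c * K x z) ps)"

definition knorm :: "(real^'n \<Rightarrow> real^'n \<Rightarrow> real) \<Rightarrow> (real \<times> (real^'n)) list \<Rightarrow> real" where
  "knorm K ps = sqrt (sum_list (map (\<lambda>(c, x). sum_list (map (\<lambda>(d, y). c * d * K x y) ps)) ps))"

definition kdiff :: "(real \<times> (real^'n)) list \<Rightarrow> (real \<times> (real^'n)) list \<Rightarrow> (real \<times> (real^'n)) list" where
  "kdiff ps qs = ps @ map (\<lambda>(c, x). (- c, x)) qs"

text \<open>Open unit ball of H_K (functions considered on Omega): f is the pointwise limit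
  on Omega of an H_K-Cauchy sequence of finite kernel combinations centred in Omega, and
  its H_K norm (the limit of the norms) is < 1.\<close>
definition rkhs_ball :: "(real^'n \<Rightarrow> real^'n \<Rightarrow> real) \<Rightarrow> (real^'n) set \<Rightarrow> (real^'n \<Rightarrow> real) set" where
  "rkhs_ball K \<Omega> = {f. \<exists>(ps :: nat \<Rightarrow> (real \<times> (real^'n)) list) r.
       (\<forall>k. \<forall>p\<in>set (ps k). snd p \<in> \<Omega>)
     \<and> (\<forall>e>0. \<exists>N. \<forall>k\<ge>N. \<forall>l\<ge>N. knorm K (kdiff (ps k) (ps l)) < e)
     \<and> (\<forall>z\<in>\<Omega>. (\<lambda>k. kev K (ps k) z) \<longlonglongrightarrow> f z)
     \<and> (\<lambda>k. knorm K (ps k)) \<longlonglongrightarrow> r \<and> r < 1}"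

text \<open>Metric entropy H(eps, A, C(Omega)): ln of the minimal number of open sup-norm
  balls of radius eps with centres in C(Omega) covering A.\<close>
definition entropy_C :: "real \<Rightarrow> (real^'n \<Rightarrow> real) set \<Rightarrow> (real^'n) set \<Rightarrow> real" where
  "entropy_C \<epsilon> A \<Omega> = ln (real (LEAST N. \<exists>C. finite C \<and> card C = N
       \<and> (\<forall>c\<in>C. continuous_on \<Omega> c)
       \<and> (\<forall>f\<in>A. \<exists>c\<in>C. \<exists>\<delta><\<epsilon>. \<forall>x\<in>\<Omega>. \<bar>f x - c x\<bar> \<le> \<delta>)))"

end

theory Submission
  imports Defs "HOL-Real_Asymp.Real_Asymp"
begin

text \<open>
  Expanding exp(2 sigma^2 <x,y>) in its Taylor series writes the Gaussian kernel as
  K(x,y) = w(x) w(y) sum_k a_k <x,y>^k with w(x) = exp(-sigma^2 |x|^2) and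
  a_k = (2 sigma^2)^k / k!.  Cutting the series at degree d leaves the d^n weighted monomials
  w(x) x^alpha with all alpha_i < d, and on the cube a tail of size about (e c / d)^(d/2),
  c = 2 sigma^2 n^2, which is below eps once d is about 4 ln(1/eps) / ln ln(1/eps).

  Eigenvalues: if more than d^n orthonormal eigenfunctions had eigenvalues > eps, some
  nontrivial combination of them would be orthogonal to all d^n weighted monomials; its
  Rayleigh quotient only sees the tail of the series and is therefore <= eps, a contradiction.

  Entropy: every element of the unit ball of H_K is, uniformly on the cube, within eps/2 of a
  combination of the d^n weighted monomials with bounded coefficients; rounding the
  coefficients to a grid of mesh eps/(4 d^n) gives an eps-net of (O(d^n/eps))^(d^n) elements.
  Both quantities are therefore O(d^n ln(1/eps)) = O(ln^(n+1)(1/eps) / (ln ln(1/eps))^n).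
\<close>

abbreviation cube_measure :: "(real^'n::finite) measure" where
  "cube_measure \<equiv> lebesgue_on cube"

lemma cube_eq_cbox: "(cube :: (real^'n) set) = cbox (-1) 1"
  unfolding cube_def by (auto simp: mem_box_cart)

lemma cube_lmeasurable: "(cube :: (real^'n) set) \<in> lmeasurable"
  by (simp add: cube_eq_cbox)

lemma finite_measure_cube: "finite_measure (cube_measure :: (real^'n) measure)"
  by (rule finite_measure_lebesgue_on[OF cube_lmeasurable])

lemma measure_cube: "measure (cube_measure :: (real^'n) measure) cube = 2 ^ CARD('n)"
proof -
  have "measure (cube_measure :: (real^'n) measure) cube = measure lebesgue (cube:: (real^'n) set)"
    by (subst measure_restrict_space) (auto simp: cube_eq_cbox)
  also have "\<dots> = Henstock_Kurzweil_Integration.content (cbox (-1::real^'n) 1)" by (simp add: cube_eq_cbox)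
  also have "\<dots> = 2 ^ CARD('n)"
  proof -
    have "(0::real^'n) \<in> cbox (-1) 1" by (simp add: mem_box_cart)
    then show ?thesis by (subst content_cbox_cart) auto
  qed
  finally show ?thesis .
qed

lemma continuous_imp_measurable_cube:
  fixes f :: "real^'n \<Rightarrow> real"
  assumes "continuous_on UNIV f"
  shows "f \<in> borel_measurable cube_measure"
  using assms by (meson continuous_imp_measurable_on_sets_lebesgue continuous_on_subset subset_UNIV cube_lmeasurable fmeasurableD)

section \<open>Taylor expansion of the Gaussian kernel\<close>

definition gauss_weight :: "real \<Rightarrow> real^'n \<Rightarrow> real" where
  "gauss_weight \<sigma> x = exp (- (\<sigma>\<^sup>2) * (norm x)\<^sup>2)"

text \<open>A word \<open>s\<close> of length \<open>k\<close> over the coordinates gives the monomial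
  \<open>x\<^bsub>s 0\<^esub> \<cdot>\<cdot>\<cdot> x\<^bsub>s (k-1)\<^esub>\<close>; then \<open>\<langle>x,y\<rangle>\<^sup>k\<close> is the sum over all words of \<open>x\<^sup>s y\<^sup>s\<close>.\<close>

definition word_monomial :: "real^'n \<Rightarrow> (nat \<Rightarrow> 'n) \<Rightarrow> nat \<Rightarrow> real" where
  "word_monomial x s k = (\<Prod>m<k. x $ s m)"

definition words :: "nat \<Rightarrow> (nat \<Rightarrow> 'n) set" where
  "words k = PiE {..<k} (\<lambda>_. UNIV)"

definition exp_coeff :: "real \<Rightarrow> nat \<Rightarrow> real" where
  "exp_coeff \<sigma> k = (2*\<sigma>\<^sup>2)^k / fact k"

lemma finite_words[simp]: "finite (words k :: (nat \<Rightarrow> 'n::finite) set)"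
  unfolding words_def by (simp add: finite_PiE)

lemma card_words: "card (words k :: (nat \<Rightarrow> 'n::finite) set) = CARD('n) ^ k"
  unfolding words_def by (simp add: card_PiE)

lemma exp_coeff_nonneg: "exp_coeff \<sigma> k \<ge> 0" unfolding exp_coeff_def by simp

lemma inner_power_eq_sum_words: "((x::real^'n) \<bullet> y) ^ k = (\<Sum>s\<in>words k. word_monomial x s k * word_monomial y s k)"
proof -
  have "(x \<bullet> y) ^ k = (\<Prod>m<k. \<Sum>i\<in>UNIV. x$i * y$i)"
    by (simp add: inner_vec_def)
  also have "\<dots> = (\<Sum>s\<in>words k. \<Prod>m<k. x $ s m * y $ s m)"
    unfolding words_def by (rule prod_sum_PiE) auto
  also have "\<dots> = (\<Sum>s\<in>words k. word_monomial x s k * word_monomial y s k)"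
    by (simp add: word_monomial_def prod.distrib)
  finally show ?thesis .
qed

lemma gaussK_factor: "gaussK \<sigma> x y = gauss_weight \<sigma> x * gauss_weight \<sigma> y * exp (2*\<sigma>\<^sup>2 * (x \<bullet> y))"
proof -
  have h: "(norm (x - y))\<^sup>2 = (norm x)\<^sup>2 + (norm y)\<^sup>2 - 2 * (x \<bullet> y)"
    by (simp add: power2_norm_eq_inner inner_diff inner_commute)
  have "- (\<sigma>\<^sup>2) * (norm (x - y))\<^sup>2 = - (\<sigma>\<^sup>2) * (norm x)\<^sup>2 + - (\<sigma>\<^sup>2) * (norm y)\<^sup>2 + 2*\<sigma>\<^sup>2 * (x \<bullet> y)"
    unfolding h by (simp add: algebra_simps)
  then show ?thesis unfolding gaussK_def gauss_weight_def
    by (simp add: exp_add[symmetric])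
qed

lemma exp_coeff_sums: "(\<lambda>k. exp_coeff \<sigma> k * t ^ k) sums exp (2*\<sigma>\<^sup>2 * t)"
proof -
  have "(\<lambda>k. (2*\<sigma>\<^sup>2 * t)^k /\<^sub>R fact k) sums exp (2*\<sigma>\<^sup>2 * t)" by (rule exp_converges)
  moreover have "(\<lambda>k. (2*\<sigma>\<^sup>2 * t)^k /\<^sub>R fact k) = (\<lambda>k. exp_coeff \<sigma> k * t ^ k)"
    by (auto simp: exp_coeff_def power_mult_distrib divide_simps)
  ultimately show ?thesis by simp
qed

lemma summable_exp_coeff: "summable (\<lambda>k. exp_coeff \<sigma> k * t ^ k)"
  using exp_coeff_sums by (rule sums_summable)

lemma gaussK_sums: "(\<lambda>k. gauss_weight \<sigma> x * gauss_weight \<sigma> y * (exp_coeff \<sigma> k * (\<Sum>s\<in>words k. word_monomial x s k * word_monomial y s k))) sums gaussK \<sigma> x y"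
  unfolding gaussK_factor inner_power_eq_sum_words[symmetric]
  by (intro sums_mult exp_coeff_sums)

lemma abs_word_monomial_le_1: "x \<in> cube \<Longrightarrow> \<bar>word_monomial x s k\<bar> \<le> 1"
  unfolding word_monomial_def cube_def abs_prod
  by (rule prod_le_1) (auto simp: abs_le_iff)

lemma gauss_weight_pos: "gauss_weight \<sigma> x > 0" unfolding gauss_weight_def by simp
lemma gauss_weight_le_1: "gauss_weight \<sigma> x \<le> 1" unfolding gauss_weight_def by simp

lemma continuous_gauss_weight: "continuous_on UNIV (gauss_weight \<sigma>)" unfolding gauss_weight_def by (intro continuous_intros)
lemma continuous_word_monomial: "continuous_on UNIV (\<lambda>x. word_monomial x s k)" unfolding word_monomial_def by (intro continuous_intros)

definition sqrt_exp_term :: "real \<Rightarrow> nat \<Rightarrow> real" where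
  "sqrt_exp_term c k = sqrt (c^k / fact k)"

lemma power_self_le_exp_fact: "real k ^ k \<le> exp (real k) * fact k"
proof -
  have s: "(\<lambda>j. real k ^ j / fact j) sums exp (real k)"
    using exp_converges[of "real k"] by (simp add: divide_simps)
  have "real k ^ k / fact k = (\<Sum>j\<in>{k}. real k ^ j / fact j)" by simp
  also have "\<dots> \<le> exp (real k)"
    using sum_le_suminf[of "\<lambda>j. real k ^ j / fact j" "{k}"] s by (auto simp: sums_iff)
  finally show ?thesis by (simp add: divide_simps)
qed

lemma sqrt_exp_term_nonneg: "c \<ge> 0 \<Longrightarrow> sqrt_exp_term c k \<ge> 0" unfolding sqrt_exp_term_def by simp

lemma sqrt_exp_term_le:
  assumes c: "c > 0" and d: "d > 0" and k: "k \<ge> d"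
  shows "sqrt_exp_term c k \<le> sqrt (exp 1 * c / real d) ^ k"
proof -
  have kp: "real k > 0" using d k by simp
  have "c^k / fact k \<le> c^k * exp (real k) / real k ^ k"
    using power_self_le_exp_fact[of k] c kp by (simp add: divide_simps mult.commute)
  also have "\<dots> = (exp 1 * c / real k) ^ k"
    by (simp add: power_divide power_mult_distrib exp_of_nat_mult[symmetric] mult.commute)
  also have "\<dots> \<le> (exp 1 * c / real d) ^ k"
    using c d k kp by (intro power_mono divide_left_mono) auto
  finally have "c^k / fact k \<le> (exp 1 * c / real d) ^ k" .
  then show ?thesis unfolding sqrt_exp_term_def real_sqrt_power[symmetric] by (rule real_sqrt_le_mono)
qed

lemma sqrt_exp_term_tail:
  assumes c: "c > 0" and d: "d > 0" and dc: "real d \<ge> 4 * exp 1 * c"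
  shows "summable (sqrt_exp_term c)" and "(\<Sum>k. sqrt_exp_term c (k + d)) \<le> 2 * sqrt (exp 1 * c / real d) ^ d"
    and "sqrt (exp 1 * c / real d) \<le> 1/2"
proof -
  define r where "r = sqrt (exp 1 * c / real d)"
  have r0: "r \<ge> 0" unfolding r_def using c by simp
  have "exp 1 * c / real d \<le> 1/4" using dc d by (simp add: divide_simps)
  then have "r \<le> sqrt (1/4)" unfolding r_def by (rule real_sqrt_le_mono)
  also have "sqrt (1/4::real) = 1/2" by (simp add: real_sqrt_divide)
  finally have r2: "r \<le> 1/2" .
  then show "sqrt (exp 1 * c / real d) \<le> 1/2" unfolding r_def .
  have geo: "summable (\<lambda>k. r ^ k)" using r0 r2 by (intro summable_geometric) simp
  have le: "\<And>k. sqrt_exp_term c (k + d) \<le> r ^ (k + d)"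
    unfolding r_def using c d by (intro sqrt_exp_term_le) auto
  have geo2: "summable (\<lambda>k. r ^ (k + d))" using geo by (simp add: summable_iff_shift)
  have sd: "summable (\<lambda>k. sqrt_exp_term c (k + d))"
    by (rule summable_comparison_test'[OF geo2, of 0]) (use c in \<open>simp add: sqrt_exp_term_nonneg le\<close>)
  then show "summable (sqrt_exp_term c)" by (simp add: summable_iff_shift)
  have "(\<Sum>k. sqrt_exp_term c (k + d)) \<le> (\<Sum>k. r ^ (k + d))"
    by (intro suminf_le le sd geo2)
  also have "(\<Sum>k. r ^ (k + d)) = r^d * (\<Sum>k. r ^ k)"
    by (subst suminf_mult[OF geo, symmetric]) (simp add: power_add mult.commute)
  also have "\<dots> = r^d / (1 - r)" using r0 r2 by (subst suminf_geometric) auto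
  also have "\<dots> \<le> 2 * r^d"
  proof -
    have "r^d*1 \<le> r^d*(2*(1-r))" using r0 r2 by (intro mult_left_mono) auto
    then show ?thesis using r0 r2 by (simp add: divide_simps algebra_simps)
  qed
  finally show "(\<Sum>k. sqrt_exp_term c (k + d)) \<le> 2 * sqrt (exp 1 * c / real d) ^ d" unfolding r_def .
qed

lemma summable_sqrt_exp_term:
  assumes "c > 0" shows "summable (sqrt_exp_term c)"
proof -
  have "4 * exp 1 * c \<le> real (nat \<lceil>4 * exp 1 * c\<rceil> + 1)"
    using real_nat_ceiling_ge[of "4 * exp 1 * c"] by simp
  then show ?thesis by (rule sqrt_exp_term_tail(1)[OF assms, rotated]) simp
qed

lemma suminf_sqrt_exp_term_nonneg: "c > 0 \<Longrightarrow> 0 \<le> (\<Sum>k. sqrt_exp_term c k)"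
  by (intro suminf_nonneg summable_sqrt_exp_term sqrt_exp_term_nonneg) auto

definition word_exponent :: "(nat \<Rightarrow> 'n) \<Rightarrow> nat \<Rightarrow> ('n \<Rightarrow> nat)" where
  "word_exponent s k = (\<lambda>i. card {m\<in>{..<k}. s m = i})"

definition monomial :: "real^'n \<Rightarrow> ('n \<Rightarrow> nat) \<Rightarrow> real" where
  "monomial x \<alpha> = (\<Prod>i\<in>UNIV. x$i ^ \<alpha> i)"

definition exponents_below :: "nat \<Rightarrow> ('n \<Rightarrow> nat) set" where
  "exponents_below d = {\<alpha>. \<forall>i. \<alpha> i < d}"

lemma word_monomial_eq_monomial: "word_monomial x s k = monomial x (word_exponent s k)"
proof -
  have "word_monomial x s k = (\<Prod>i\<in>UNIV. \<Prod>m\<in>{m\<in>{..<k}. s m = i}. x $ s m)"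
    unfolding word_monomial_def by (rule prod.group[symmetric]) auto
  also have "\<dots> = (\<Prod>i\<in>UNIV. \<Prod>m\<in>{m\<in>{..<k}. s m = i}. x $ i)"
    by (intro prod.cong) auto
  also have "\<dots> = monomial x (word_exponent s k)" by (simp add: monomial_def word_exponent_def)
  finally show ?thesis .
qed

lemma word_exponent_in_exponents_below: "k < d \<Longrightarrow> word_exponent s k \<in> exponents_below d"
proof -
  assume "k < d"
  have "card {m\<in>{..<k}. s m = i} \<le> card {..<k}" for i by (intro card_mono) auto
  then show ?thesis using \<open>k < d\<close> unfolding exponents_below_def word_exponent_def by (auto intro: le_less_trans)
qed

lemma exponents_below_eq_PiE: "exponents_below d = PiE (UNIV :: 'n::finite set) (\<lambda>_. {..<d})"
  unfolding exponents_below_def PiE_def extensional_def by auto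

lemma finite_exponents_below[simp]: "finite (exponents_below d :: ('n::finite \<Rightarrow> nat) set)"
  unfolding exponents_below_eq_PiE by (simp add: finite_PiE)

lemma card_exponents_below: "card (exponents_below d :: ('n::finite \<Rightarrow> nat) set) = d ^ CARD('n)"
  unfolding exponents_below_eq_PiE by (simp add: card_PiE)

lemma abs_monomial_le_1: "x \<in> cube \<Longrightarrow> \<bar>monomial x \<alpha>\<bar> \<le> 1"
proof -
  assume "x \<in> cube"
  then have h: "\<bar>x$i\<bar> \<le> 1" for i unfolding cube_def by (auto simp: abs_le_iff)
  show ?thesis unfolding monomial_def abs_prod power_abs
    by (rule prod_le_1) (auto intro: power_le_one h)
qed

lemma continuous_monomial: "continuous_on UNIV (\<lambda>x. monomial x \<alpha>)" unfolding monomial_def by (intro continuous_intros)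

lemma nontrivial_combination_vanishing:
  fixes v :: "'p \<Rightarrow> 'a \<Rightarrow> real"
  assumes "finite A" "finite J" "card J > card A"
  shows "\<exists>t. (\<exists>p\<in>J. t p \<noteq> 0) \<and> (\<forall>\<alpha>\<in>A. (\<Sum>p\<in>J. t p * v p \<alpha>) = 0)"
  using assms
proof (induction A arbitrary: J v rule: finite_induct)
  case empty
  then obtain p where "p \<in> J" by fastforce
  then show ?case by (intro exI[of _ "\<lambda>_. 1"]) auto
next
  case (insert \<beta> A)
  show ?case
  proof (cases "\<forall>p\<in>J. v p \<beta> = 0")
    case True
    have "card J > card A" using insert by simp
    with insert.IH[of J v] insert.prems obtain t where
      t: "\<exists>p\<in>J. t p \<noteq> 0" "\<forall>\<alpha>\<in>A. (\<Sum>p\<in>J. t p * v p \<alpha>) = 0" by auto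
    show ?thesis using t True by (intro exI[of _ t]) auto
  next
    case False
    then obtain p0 where p0: "p0 \<in> J" "v p0 \<beta> \<noteq> 0" by auto
    define J' where "J' = J - {p0}"
    define w where "w p \<alpha> = v p \<alpha> - (v p \<beta> / v p0 \<beta>) * v p0 \<alpha>" for p \<alpha>
    have cJ: "card J' > card A" using insert p0 unfolding J'_def by simp
    from insert.IH[of J' w] cJ insert.prems obtain t where
      t: "\<exists>p\<in>J'. t p \<noteq> 0" "\<forall>\<alpha>\<in>A. (\<Sum>p\<in>J'. t p * w p \<alpha>) = 0" unfolding J'_def by auto
    define t' where "t' p = (if p = p0 then - (\<Sum>q\<in>J'. t q * v q \<beta>) / v p0 \<beta> else t p)" for p
    have fJ: "finite J'" using insert unfolding J'_def by simp
    have key: "(\<Sum>p\<in>J. t' p * v p \<alpha>) = (\<Sum>p\<in>J'. t p * w p \<alpha>)" for \<alpha>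
    proof -
      have "(\<Sum>p\<in>J. t' p * v p \<alpha>) = t' p0 * v p0 \<alpha> + (\<Sum>p\<in>J'. t' p * v p \<alpha>)"
        using p0 insert.prems unfolding J'_def by (simp add: sum.remove)
      also have "(\<Sum>p\<in>J'. t' p * v p \<alpha>) = (\<Sum>p\<in>J'. t p * v p \<alpha>)"
        unfolding t'_def J'_def by (intro sum.cong) auto
      also have "(\<Sum>p\<in>J'. t p * w p \<alpha>) = (\<Sum>p\<in>J'. t p * v p \<alpha>) - (\<Sum>q\<in>J'. t q * v q \<beta>) / v p0 \<beta> * v p0 \<alpha>"
        unfolding w_def by (simp add: algebra_simps sum_subtractf sum_distrib_left sum_divide_distrib)
      ultimately show ?thesis unfolding t'_def by simp
    qed
    have "\<forall>\<alpha>\<in>insert \<beta> A. (\<Sum>p\<in>J. t' p * v p \<alpha>) = 0"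
    proof
      fix \<alpha> assume "\<alpha> \<in> insert \<beta> A"
      then show "(\<Sum>p\<in>J. t' p * v p \<alpha>) = 0"
      proof
        assume "\<alpha> = \<beta>"
        then show ?thesis unfolding key w_def using p0 by simp
      next
        assume "\<alpha> \<in> A" then show ?thesis unfolding key using t by simp
      qed
    qed
    moreover have "\<exists>p\<in>J. t' p \<noteq> 0" using t unfolding t'_def J'_def by auto
    ultimately show ?thesis by blast
  qed
qed

section \<open>Finite kernel combinations\<close>

lemma sum_list_map_eq_sum_nth: "sum_list (map f xs) = (\<Sum>j<length xs. f (xs!j))"
  by (simp add: sum_list_sum_nth atLeast0LessThan)

definition word_coeff :: "real \<Rightarrow> (real \<times> (real^'n)) list \<Rightarrow> (nat \<Rightarrow> 'n) \<Rightarrow> nat \<Rightarrow> real" where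
  "word_coeff \<sigma> ps s k = (\<Sum>j<length ps. fst (ps!j) * gauss_weight \<sigma> (snd (ps!j)) * word_monomial (snd (ps!j)) s k)"

definition gram_form :: "real \<Rightarrow> (real \<times> (real^'n)) list \<Rightarrow> real" where
  "gram_form \<sigma> ps = sum_list (map (\<lambda>(c, x). sum_list (map (\<lambda>(d, y). c * d * gaussK \<sigma> x y) ps)) ps)"

definition kev_term :: "real \<Rightarrow> (real \<times> (real^'n)) list \<Rightarrow> real^'n \<Rightarrow> nat \<Rightarrow> real" where
  "kev_term \<sigma> ps z k = gauss_weight \<sigma> z * (exp_coeff \<sigma> k * (\<Sum>s\<in>words k. word_monomial z s k * word_coeff \<sigma> ps s k))"

lemma sum_swap3: "(\<Sum>i\<in>A. \<Sum>j\<in>B. \<Sum>s\<in>C. f i j s) = (\<Sum>s\<in>C. \<Sum>i\<in>A. \<Sum>j\<in>B. f i j s)"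
proof -
  have "(\<Sum>i\<in>A. \<Sum>j\<in>B. \<Sum>s\<in>C. f i j s) = (\<Sum>i\<in>A. \<Sum>s\<in>C. \<Sum>j\<in>B. f i j s)"
    by (intro sum.cong refl sum.swap)
  also have "\<dots> = (\<Sum>s\<in>C. \<Sum>i\<in>A. \<Sum>j\<in>B. f i j s)" by (rule sum.swap)
  finally show ?thesis .
qed

lemma kev_eq_sum_nth: "kev K ps z = (\<Sum>j<length ps. fst (ps!j) * K (snd (ps!j)) z)"
  unfolding kev_def sum_list_map_eq_sum_nth by (simp add: case_prod_beta)

lemma gram_form_eq_sum_nth: "gram_form \<sigma> ps = (\<Sum>i<length ps. \<Sum>j<length ps. fst (ps!i) * fst (ps!j) * gaussK \<sigma> (snd (ps!i)) (snd (ps!j)))"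
  unfolding gram_form_def sum_list_map_eq_sum_nth by (simp add: case_prod_beta)

lemma knorm_gaussK_eq: "knorm (gaussK \<sigma>) ps = sqrt (gram_form \<sigma> ps)"
  unfolding knorm_def gram_form_def ..

lemma kev_gaussK_sums: "kev_term \<sigma> ps z sums kev (gaussK \<sigma>) ps z"
proof -
  have "(\<lambda>k. \<Sum>j<length ps. fst (ps!j) * (gauss_weight \<sigma> (snd (ps!j)) * gauss_weight \<sigma> z *
        (exp_coeff \<sigma> k * (\<Sum>s\<in>words k. word_monomial (snd (ps!j)) s k * word_monomial z s k))))
     sums (\<Sum>j<length ps. fst (ps!j) * gaussK \<sigma> (snd (ps!j)) z)"
    by (intro sums_sum sums_mult gaussK_sums)
  moreover have "(\<lambda>k. \<Sum>j<length ps. fst (ps!j) * (gauss_weight \<sigma> (snd (ps!j)) * gauss_weight \<sigma> z *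
        (exp_coeff \<sigma> k * (\<Sum>s\<in>words k. word_monomial (snd (ps!j)) s k * word_monomial z s k)))) =
     (\<lambda>k. gauss_weight \<sigma> z * (exp_coeff \<sigma> k * (\<Sum>s\<in>words k. word_monomial z s k * word_coeff \<sigma> ps s k)))"
    unfolding word_coeff_def
    by (auto simp: sum_distrib_left sum_distrib_right algebra_simps intro!: ext sum.swap[THEN trans] sum.cong)
  ultimately show ?thesis unfolding kev_eq_sum_nth kev_term_def[abs_def] by simp
qed

lemma gram_form_sums: "(\<lambda>k. exp_coeff \<sigma> k * (\<Sum>s\<in>words k. (word_coeff \<sigma> ps s k)\<^sup>2)) sums gram_form \<sigma> ps"
proof -
  have "(\<lambda>k. \<Sum>i<length ps. \<Sum>j<length ps. fst (ps!i) * fst (ps!j) * (gauss_weight \<sigma> (snd (ps!i)) * gauss_weight \<sigma> (snd (ps!j)) *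
        (exp_coeff \<sigma> k * (\<Sum>s\<in>words k. word_monomial (snd (ps!i)) s k * word_monomial (snd (ps!j)) s k))))
     sums gram_form \<sigma> ps"
    unfolding gram_form_eq_sum_nth by (intro sums_sum sums_mult gaussK_sums)
  moreover have "(\<lambda>k. \<Sum>i<length ps. \<Sum>j<length ps. fst (ps!i) * fst (ps!j) * (gauss_weight \<sigma> (snd (ps!i)) * gauss_weight \<sigma> (snd (ps!j)) *
        (exp_coeff \<sigma> k * (\<Sum>s\<in>words k. word_monomial (snd (ps!i)) s k * word_monomial (snd (ps!j)) s k)))) =
      (\<lambda>k. exp_coeff \<sigma> k * (\<Sum>s\<in>words k. (word_coeff \<sigma> ps s k)\<^sup>2))"
  proof
    fix k
    show "(\<Sum>i<length ps. \<Sum>j<length ps. fst (ps!i) * fst (ps!j) * (gauss_weight \<sigma> (snd (ps!i)) * gauss_weight \<sigma> (snd (ps!j)) *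
        (exp_coeff \<sigma> k * (\<Sum>s\<in>words k. word_monomial (snd (ps!i)) s k * word_monomial (snd (ps!j)) s k)))) =
      exp_coeff \<sigma> k * (\<Sum>s\<in>words k. (word_coeff \<sigma> ps s k)\<^sup>2)"
    proof -
      have "exp_coeff \<sigma> k * (\<Sum>s\<in>words k. (word_coeff \<sigma> ps s k)\<^sup>2) = (\<Sum>s\<in>words k. \<Sum>i<length ps. \<Sum>j<length ps.
         exp_coeff \<sigma> k * ((fst (ps!j) * gauss_weight \<sigma> (snd (ps!j)) * word_monomial (snd (ps!j)) s k) * (fst (ps!i) * gauss_weight \<sigma> (snd (ps!i)) * word_monomial (snd (ps!i)) s k)))"
        unfolding word_coeff_def power2_eq_square sum_distrib_right sum_distrib_left ..
      also have "\<dots> = (\<Sum>i<length ps. \<Sum>j<length ps. \<Sum>s\<in>words k.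
         exp_coeff \<sigma> k * ((fst (ps!j) * gauss_weight \<sigma> (snd (ps!j)) * word_monomial (snd (ps!j)) s k) * (fst (ps!i) * gauss_weight \<sigma> (snd (ps!i)) * word_monomial (snd (ps!i)) s k)))"
        by (rule sum_swap3[symmetric])
      also have "\<dots> = (\<Sum>i<length ps. \<Sum>j<length ps. fst (ps!i) * fst (ps!j) * (gauss_weight \<sigma> (snd (ps!i)) * gauss_weight \<sigma> (snd (ps!j)) *
        (exp_coeff \<sigma> k * (\<Sum>s\<in>words k. word_monomial (snd (ps!i)) s k * word_monomial (snd (ps!j)) s k))))"
        by (intro sum.cong refl) (simp add: sum_distrib_left algebra_simps)
      finally show ?thesis by simp
    qed
  qed
  ultimately show ?thesis by simp
qed

lemma gram_form_nonneg: "gram_form \<sigma> ps \<ge> 0"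
  by (rule sums_le[OF _ sums_zero gram_form_sums]) (intro mult_nonneg_nonneg exp_coeff_nonneg sum_nonneg; simp)

lemma gram_form_term_le: "exp_coeff \<sigma> k * (\<Sum>s\<in>words k. (word_coeff \<sigma> ps s k)\<^sup>2) \<le> gram_form \<sigma> ps"
proof -
  have "(\<Sum>j\<in>{k}. exp_coeff \<sigma> j * (\<Sum>s\<in>words j. (word_coeff \<sigma> ps s j)\<^sup>2)) \<le> gram_form \<sigma> ps"
    using gram_form_sums[of \<sigma> ps]
    by (intro sum_le_suminf[where f="\<lambda>j. exp_coeff \<sigma> j * (\<Sum>s\<in>words j. (word_coeff \<sigma> ps s j)\<^sup>2)", THEN order_trans])
       (auto simp: sums_iff intro!: mult_nonneg_nonneg exp_coeff_nonneg sum_nonneg)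
  then show ?thesis by simp
qed

text \<open>Chosen so that \<open>n\<^sup>k sqrt(a\<^sub>k) = sqrt_exp_term c k\<close>, with \<open>a\<^sub>k\<close> the Taylor coefficients.\<close>

definition growth_const :: "real \<Rightarrow> 'n itself \<Rightarrow> real" where
  "growth_const \<sigma> _ = 2 * \<sigma>\<^sup>2 * real CARD('n) ^ 2"

lemma growth_const_pos: "\<sigma> > 0 \<Longrightarrow> growth_const \<sigma> TYPE('n::finite) > 0"
  unfolding growth_const_def by simp

lemma exp_coeff_mult_power_le:
  "exp_coeff \<sigma> k * real CARD('n::finite) ^ k \<le> (sqrt_exp_term (growth_const \<sigma> TYPE('n)) k)\<^sup>2"
proof -
  have "real CARD('n) ^ k \<le> (real CARD('n) ^ 2) ^ k"
    by (intro power_mono) (auto simp: power2_eq_square)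
  then have "exp_coeff \<sigma> k * real CARD('n) ^ k \<le> (2 * \<sigma>\<^sup>2) ^ k * (real CARD('n) ^ 2) ^ k / fact k"
    unfolding exp_coeff_def by (simp add: divide_right_mono mult_left_mono)
  also have "\<dots> = (sqrt_exp_term (growth_const \<sigma> TYPE('n)) k)\<^sup>2"
    unfolding sqrt_exp_term_def growth_const_def by (simp add: power_mult_distrib)
  finally show ?thesis .
qed

lemma abs_le_sqrt_sum: "finite S \<Longrightarrow> s \<in> S \<Longrightarrow> \<bar>f s\<bar> \<le> sqrt (\<Sum>t\<in>S. (f t)\<^sup>2)"
  by (metis member_le_sum real_sqrt_abs real_sqrt_le_mono zero_le_power2)

lemma word_coeff_abs_sum_le:
  fixes ps :: "(real \<times> (real^'n::finite)) list"
  shows "exp_coeff \<sigma> k * (\<Sum>s\<in>words k. \<bar>word_coeff \<sigma> ps s k\<bar>) \<le> sqrt_exp_term (growth_const \<sigma> TYPE('n::finite)) k * sqrt (gram_form \<sigma> ps)"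
proof -
  define X where "X = (\<Sum>s\<in>(words k :: (nat \<Rightarrow> 'n) set). (word_coeff \<sigma> ps s k)\<^sup>2)"
  have X0: "X \<ge> 0" unfolding X_def by (simp add: sum_nonneg)
  have "(\<Sum>s\<in>(words k :: (nat \<Rightarrow> 'n) set). \<bar>word_coeff \<sigma> ps s k\<bar>) \<le> (\<Sum>s\<in>(words k :: (nat \<Rightarrow> 'n) set). sqrt X)"
    unfolding X_def by (intro sum_mono abs_le_sqrt_sum) auto
  also have "\<dots> = real CARD('n) ^ k * sqrt X" by (simp add: card_words)
  finally have 1: "(\<Sum>s\<in>(words k :: (nat \<Rightarrow> 'n) set). \<bar>word_coeff \<sigma> ps s k\<bar>) \<le> real CARD('n) ^ k * sqrt X" .
  have "exp_coeff \<sigma> k * (\<Sum>s\<in>words k. \<bar>word_coeff \<sigma> ps s k\<bar>) \<le> exp_coeff \<sigma> k * (real CARD('n) ^ k * sqrt X)"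
    by (intro mult_left_mono 1 exp_coeff_nonneg)
  also have "\<dots> = real CARD('n) ^ k * sqrt (exp_coeff \<sigma> k) * sqrt (exp_coeff \<sigma> k * X)"
    using exp_coeff_nonneg[of \<sigma> k] X0 by (simp add: real_sqrt_mult)
  also have "\<dots> \<le> real CARD('n) ^ k * sqrt (exp_coeff \<sigma> k) * sqrt (gram_form \<sigma> ps)"
    unfolding X_def using gram_form_term_le[of \<sigma> k ps] exp_coeff_nonneg[of \<sigma> k]
    by (intro mult_left_mono real_sqrt_le_mono) auto
  also have "real CARD('n) ^ k * sqrt (exp_coeff \<sigma> k) = sqrt_exp_term (growth_const \<sigma> TYPE('n)) k"
  proof -
    have "sqrt_exp_term (growth_const \<sigma> TYPE('n)) k = sqrt ((real CARD('n) ^ k)\<^sup>2 * exp_coeff \<sigma> k)"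
      unfolding sqrt_exp_term_def growth_const_def exp_coeff_def by (simp add: power_mult_distrib power_even_eq power_mult[symmetric] mult.commute)
    then show ?thesis by (simp add: real_sqrt_mult)
  qed
  finally show ?thesis .
qed

lemma abs_kev_term_le:
  fixes ps :: "(real \<times> (real^'n::finite)) list"
  assumes "z \<in> cube"
  shows "\<bar>kev_term \<sigma> ps z k\<bar> \<le> sqrt_exp_term (growth_const \<sigma> TYPE('n::finite)) k * sqrt (gram_form \<sigma> ps)"
proof -
  have "\<bar>gauss_weight \<sigma> z * (exp_coeff \<sigma> k * (\<Sum>s\<in>words k. word_monomial z s k * word_coeff \<sigma> ps s k))\<bar> \<le> exp_coeff \<sigma> k * (\<Sum>s\<in>words k. \<bar>word_monomial z s k * word_coeff \<sigma> ps s k\<bar>)"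
  proof -
    have "\<bar>gauss_weight \<sigma> z * (exp_coeff \<sigma> k * (\<Sum>s\<in>words k. word_monomial z s k * word_coeff \<sigma> ps s k))\<bar> =
       gauss_weight \<sigma> z * (exp_coeff \<sigma> k * \<bar>\<Sum>s\<in>words k. word_monomial z s k * word_coeff \<sigma> ps s k\<bar>)"
      using gauss_weight_pos[of \<sigma> z] exp_coeff_nonneg[of \<sigma> k] by (simp add: abs_mult)
    also have "\<dots> \<le> 1 * (exp_coeff \<sigma> k * \<bar>\<Sum>s\<in>words k. word_monomial z s k * word_coeff \<sigma> ps s k\<bar>)"
      using gauss_weight_le_1[of \<sigma> z] exp_coeff_nonneg[of \<sigma> k] by (intro mult_right_mono) auto
    also have "\<dots> \<le> exp_coeff \<sigma> k * (\<Sum>s\<in>words k. \<bar>word_monomial z s k * word_coeff \<sigma> ps s k\<bar>)"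
      using exp_coeff_nonneg[of \<sigma> k] by (simp add: mult_left_mono sum_abs)
    finally show ?thesis .
  qed
  also have "\<dots> \<le> exp_coeff \<sigma> k * (\<Sum>s\<in>words k. \<bar>word_coeff \<sigma> ps s k\<bar>)"
    using abs_word_monomial_le_1[OF assms] by (intro mult_left_mono sum_mono exp_coeff_nonneg) (auto simp: abs_mult intro: mult_left_le_one_le)
  also have "\<dots> \<le> sqrt_exp_term (growth_const \<sigma> TYPE('n)) k * sqrt (gram_form \<sigma> ps)" by (rule word_coeff_abs_sum_le)
  finally show ?thesis unfolding kev_term_def .
qed

lemma abs_sums_le:
  fixes f g :: "nat \<Rightarrow> real"
  assumes "f sums S" "summable g" "\<And>k. \<bar>f k\<bar> \<le> g k"
  shows "\<bar>S\<bar> \<le> suminf g"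
proof -
  have sa: "summable (\<lambda>k. \<bar>f k\<bar>)" by (rule summable_comparison_test[OF _ assms(2)]) (use assms(3) in auto)
  have "\<bar>S\<bar> = \<bar>suminf f\<bar>" using assms(1) by (simp add: sums_iff)
  also have "\<dots> \<le> (\<Sum>k. \<bar>f k\<bar>)" using summable_norm[of f] sa by simp
  also have "\<dots> \<le> suminf g" by (intro suminf_le sa assms)
  finally show ?thesis .
qed

lemma abs_kev_gaussK_le:
  assumes "z \<in> cube" "summable (sqrt_exp_term (growth_const \<sigma> TYPE('n::finite)))"
  shows "\<bar>kev (gaussK \<sigma>) (ps :: (real \<times> (real^'n)) list) z\<bar> \<le> (\<Sum>k. sqrt_exp_term (growth_const \<sigma> TYPE('n)) k) * sqrt (gram_form \<sigma> ps)"
proof -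
  have "\<bar>kev (gaussK \<sigma>) ps z\<bar> \<le> (\<Sum>k. sqrt_exp_term (growth_const \<sigma> TYPE('n)) k * sqrt (gram_form \<sigma> ps))"
    by (rule abs_sums_le[OF kev_gaussK_sums summable_mult2[OF assms(2)] abs_kev_term_le[OF assms(1)]])
  also have "\<dots> = (\<Sum>k. sqrt_exp_term (growth_const \<sigma> TYPE('n)) k) * sqrt (gram_form \<sigma> ps)"
    using assms(2) by (rule suminf_mult2[symmetric])
  finally show ?thesis .
qed

definition head_coeff :: "real \<Rightarrow> (real \<times> (real^'n)) list \<Rightarrow> nat \<Rightarrow> ('n \<Rightarrow> nat) \<Rightarrow> real" where
  "head_coeff \<sigma> ps d \<alpha> = (\<Sum>k<d. exp_coeff \<sigma> k * (\<Sum>s\<in>{s\<in>words k. word_exponent s k = \<alpha>}. word_coeff \<sigma> ps s k))"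

definition gauss_poly :: "real \<Rightarrow> nat \<Rightarrow> (('n \<Rightarrow> nat) \<Rightarrow> real) \<Rightarrow> real^'n \<Rightarrow> real" where
  "gauss_poly \<sigma> d g z = gauss_weight \<sigma> z * (\<Sum>\<alpha>\<in>exponents_below d. g \<alpha> * monomial z \<alpha>)"

lemma sum_kev_term_head:
  fixes ps :: "(real \<times> (real^'n::finite)) list"
  shows "(\<Sum>k<d. kev_term \<sigma> ps z k) = gauss_poly \<sigma> d (head_coeff \<sigma> ps d) z"
proof -
  have "(\<Sum>k<d. kev_term \<sigma> ps z k) = gauss_weight \<sigma> z * (\<Sum>k<d. exp_coeff \<sigma> k * (\<Sum>s\<in>words k. monomial z (word_exponent s k) * word_coeff \<sigma> ps s k))"
    unfolding kev_term_def word_monomial_eq_monomial by (simp add: sum_distrib_left)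
  also have "(\<Sum>k<d. exp_coeff \<sigma> k * (\<Sum>s\<in>words k. monomial z (word_exponent s k) * word_coeff \<sigma> ps s k)) =
      (\<Sum>k<d. exp_coeff \<sigma> k * (\<Sum>\<alpha>\<in>exponents_below d. \<Sum>s\<in>{s\<in>words k. word_exponent s k = \<alpha>}. monomial z (word_exponent s k) * word_coeff \<sigma> ps s k))"
    by (intro sum.cong refl arg_cong2[where f="(*)"] sum.group[symmetric]) (auto intro: word_exponent_in_exponents_below)
  also have "\<dots> = (\<Sum>k<d. \<Sum>\<alpha>\<in>exponents_below d. monomial z \<alpha> * (exp_coeff \<sigma> k * (\<Sum>s\<in>{s\<in>words k. word_exponent s k = \<alpha>}. word_coeff \<sigma> ps s k)))"
    by (intro sum.cong refl) (auto simp: sum_distrib_left algebra_simps)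
  also have "\<dots> = (\<Sum>\<alpha>\<in>exponents_below d. head_coeff \<sigma> ps d \<alpha> * monomial z \<alpha>)"
    unfolding head_coeff_def by (subst sum.swap) (simp add: sum_distrib_left sum_distrib_right mult.commute)
  finally show ?thesis unfolding gauss_poly_def .
qed

lemma kev_gaussK_split:
  fixes ps :: "(real \<times> (real^'n::finite)) list"
  shows "kev (gaussK \<sigma>) ps z = gauss_poly \<sigma> d (head_coeff \<sigma> ps d) z + (\<Sum>k. kev_term \<sigma> ps z (k + d))"
proof -
  have s: "kev_term \<sigma> ps z sums kev (gaussK \<sigma>) ps z" by (rule kev_gaussK_sums)
  then have "kev (gaussK \<sigma>) ps z = suminf (kev_term \<sigma> ps z)" by (simp add: sums_iff)
  also have "\<dots> = (\<Sum>k. kev_term \<sigma> ps z (k + d)) + (\<Sum>k<d. kev_term \<sigma> ps z k)"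
    using s by (intro suminf_split_initial_segment) (simp add: sums_iff)
  finally show ?thesis unfolding sum_kev_term_head by simp
qed

lemma abs_kev_tail_le:
  fixes ps :: "(real \<times> (real^'n::finite)) list"
  assumes "z \<in> cube" "summable (sqrt_exp_term (growth_const \<sigma> TYPE('n)))"
  shows "\<bar>\<Sum>k. kev_term \<sigma> ps z (k + d)\<bar> \<le> (\<Sum>k. sqrt_exp_term (growth_const \<sigma> TYPE('n)) (k + d)) * sqrt (gram_form \<sigma> ps)"
proof -
  have s: "kev_term \<sigma> ps z sums kev (gaussK \<sigma>) ps z" by (rule kev_gaussK_sums)
  have sd: "summable (\<lambda>k. kev_term \<sigma> ps z (k + d))" using s by (simp add: sums_iff summable_iff_shift)
  have bd: "summable (\<lambda>k. sqrt_exp_term (growth_const \<sigma> TYPE('n)) (k + d))" using assms(2) by (simp add: summable_iff_shift)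
  have "\<bar>\<Sum>k. kev_term \<sigma> ps z (k + d)\<bar> \<le> (\<Sum>k. sqrt_exp_term (growth_const \<sigma> TYPE('n)) (k + d) * sqrt (gram_form \<sigma> ps))"
    by (rule abs_sums_le[OF summable_sums[OF sd] summable_mult2[OF bd]])
       (rule abs_kev_term_le[OF assms(1)])
  also have "\<dots> = (\<Sum>k. sqrt_exp_term (growth_const \<sigma> TYPE('n)) (k + d)) * sqrt (gram_form \<sigma> ps)"
    using bd by (rule suminf_mult2[symmetric])
  finally show ?thesis .
qed

lemma abs_head_coeff_le:
  fixes ps :: "(real \<times> (real^'n::finite)) list"
  assumes "\<sigma> > 0" "summable (sqrt_exp_term (growth_const \<sigma> TYPE('n)))"
  shows "\<bar>head_coeff \<sigma> ps d \<alpha>\<bar> \<le> (\<Sum>k. sqrt_exp_term (growth_const \<sigma> TYPE('n)) k) * sqrt (gram_form \<sigma> ps)"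
proof -
  have "\<bar>head_coeff \<sigma> ps d \<alpha>\<bar> \<le> (\<Sum>k<d. exp_coeff \<sigma> k * (\<Sum>s\<in>words k. \<bar>word_coeff \<sigma> ps s k\<bar>))"
    unfolding head_coeff_def
  proof (rule order_trans[OF sum_abs], intro sum_mono)
    fix k
    have "\<bar>exp_coeff \<sigma> k * (\<Sum>s\<in>{s\<in>words k. word_exponent s k = \<alpha>}. word_coeff \<sigma> ps s k)\<bar> = exp_coeff \<sigma> k * \<bar>\<Sum>s\<in>{s\<in>words k. word_exponent s k = \<alpha>}. word_coeff \<sigma> ps s k\<bar>"
      using exp_coeff_nonneg[of \<sigma> k] by (simp add: abs_mult)
    also have "\<dots> \<le> exp_coeff \<sigma> k * (\<Sum>s\<in>words k. \<bar>word_coeff \<sigma> ps s k\<bar>)"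
      using exp_coeff_nonneg[of \<sigma> k] by (intro mult_left_mono order_trans[OF sum_abs] sum_mono2) auto
    finally show "\<bar>exp_coeff \<sigma> k * (\<Sum>s\<in>{s\<in>words k. word_exponent s k = \<alpha>}. word_coeff \<sigma> ps s k)\<bar> \<le> exp_coeff \<sigma> k * (\<Sum>s\<in>words k. \<bar>word_coeff \<sigma> ps s k\<bar>)" .
  qed
  also have "\<dots> \<le> (\<Sum>k<d. sqrt_exp_term (growth_const \<sigma> TYPE('n)) k * sqrt (gram_form \<sigma> ps))"
    by (intro sum_mono word_coeff_abs_sum_le)
  also have "\<dots> = (\<Sum>k<d. sqrt_exp_term (growth_const \<sigma> TYPE('n)) k) * sqrt (gram_form \<sigma> ps)" by (simp add: sum_distrib_right)
  also have "\<dots> \<le> (\<Sum>k. sqrt_exp_term (growth_const \<sigma> TYPE('n)) k) * sqrt (gram_form \<sigma> ps)"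
    using assms growth_const_pos[OF assms(1)] gram_form_nonneg
    by (intro mult_right_mono sum_le_suminf) (auto intro: sqrt_exp_term_nonneg less_imp_le)
  finally show ?thesis .
qed

lemma abs_kev_tail_le_of_cutoff:
  fixes ps :: "(real \<times> (real^'n::finite)) list"
  assumes sig: "\<sigma> > 0" and z: "z \<in> cube" and d: "d > 0"
    and dc: "4 * exp 1 * growth_const \<sigma> TYPE('n) \<le> real d"
    and small: "2 * sqrt (exp 1 * growth_const \<sigma> TYPE('n) / real d) ^ d \<le> \<epsilon> / 4"
    and Q1: "gram_form \<sigma> ps \<le> 1"
  shows "\<bar>\<Sum>k. kev_term \<sigma> ps z (k + d)\<bar> \<le> \<epsilon> / 4"
proof -
  define c where "c = growth_const \<sigma> TYPE('n)"
  have c0: "c > 0" unfolding c_def by (rule growth_const_pos[OF sig])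
  note tail = sqrt_exp_term_tail[OF c0 d dc[folded c_def]]
  have "\<bar>\<Sum>k. kev_term \<sigma> ps z (k + d)\<bar> \<le> (\<Sum>k. sqrt_exp_term c (k + d)) * sqrt (gram_form \<sigma> ps)"
    unfolding c_def by (rule abs_kev_tail_le[OF z tail(1)[unfolded c_def]])
  also have "\<dots> \<le> (\<Sum>k. sqrt_exp_term c (k + d)) * 1"
    using Q1 gram_form_nonneg[of \<sigma> ps] tail(1) c0
    by (intro mult_left_mono) (auto intro!: suminf_nonneg sqrt_exp_term_nonneg simp: summable_iff_shift)
  also have "\<dots> \<le> \<epsilon> / 4" using tail(2) small unfolding c_def by simp
  finally show ?thesis .
qed

lemma kev_kdiff: "kev K (kdiff ps qs) z = kev K ps z - kev K qs z"
  unfolding kev_def kdiff_def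
  by (simp add: sum_list_map_eq_sum_nth nth_append case_prod_beta sum_negf)

lemma rkhs_ball_approx:
  fixes f :: "real^'n \<Rightarrow> real"
  assumes sig: "\<sigma> > 0" and f: "f \<in> rkhs_ball (gaussK \<sigma> :: real^'n \<Rightarrow> real^'n \<Rightarrow> real) cube"
    and e: "e > 0"
  shows "\<exists>ps :: (real \<times> (real^'n)) list. gram_form \<sigma> ps \<le> 1 \<and>
           (\<forall>z\<in>cube. \<bar>f z - kev (gaussK \<sigma>) ps z\<bar> \<le> (\<Sum>k. sqrt_exp_term (growth_const \<sigma> TYPE('n)) k) * e)"
proof -
  define R where "R = (\<Sum>k. sqrt_exp_term (growth_const \<sigma> TYPE('n)) k)"
  from f obtain ps :: "nat \<Rightarrow> (real \<times> (real^'n)) list" and r where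
    cau: "\<forall>e>0. \<exists>N. \<forall>k\<ge>N. \<forall>l\<ge>N. knorm (gaussK \<sigma>) (kdiff (ps k) (ps l)) < e"
    and lim: "\<forall>z\<in>cube. (\<lambda>k. kev (gaussK \<sigma>) (ps k) z) \<longlonglongrightarrow> f z"
    and nl: "(\<lambda>k. knorm (gaussK \<sigma>) (ps k)) \<longlonglongrightarrow> r" and r1: "r < 1"
    unfolding rkhs_ball_def by blast
  from cau e obtain N where N: "\<forall>k\<ge>N. \<forall>l\<ge>N. knorm (gaussK \<sigma>) (kdiff (ps k) (ps l)) < e" by blast
  from order_tendstoD(2)[OF nl r1] obtain N2 where N2: "\<forall>k\<ge>N2. knorm (gaussK \<sigma>) (ps k) < 1"
    unfolding eventually_sequentially by blast
  define k where "k = max N N2"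
  have "sqrt (gram_form \<sigma> (ps k)) < 1" using N2 unfolding k_def knorm_gaussK_eq by simp
  then have Q1: "gram_form \<sigma> (ps k) \<le> 1" by simp
  have sb: "summable (sqrt_exp_term (growth_const \<sigma> TYPE('n)))"
    by (rule summable_sqrt_exp_term[OF growth_const_pos[OF sig]])
  have R0: "R \<ge> 0" unfolding R_def by (rule suminf_sqrt_exp_term_nonneg[OF growth_const_pos[OF sig]])
  have "\<bar>f z - kev (gaussK \<sigma>) (ps k) z\<bar> \<le> R * e" if z: "z \<in> cube" for z
  proof -
    have "(\<lambda>l. \<bar>kev (gaussK \<sigma>) (ps l) z - kev (gaussK \<sigma>) (ps k) z\<bar>) \<longlonglongrightarrow> \<bar>f z - kev (gaussK \<sigma>) (ps k) z\<bar>"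
      using lim z by (intro tendsto_intros) auto
    moreover have "\<forall>l\<ge>N. \<bar>kev (gaussK \<sigma>) (ps l) z - kev (gaussK \<sigma>) (ps k) z\<bar> \<le> R * e"
    proof (intro allI impI)
      fix l assume l: "l \<ge> N"
      have "\<bar>kev (gaussK \<sigma>) (ps l) z - kev (gaussK \<sigma>) (ps k) z\<bar> = \<bar>kev (gaussK \<sigma>) (kdiff (ps k) (ps l)) z\<bar>"
        by (simp add: kev_kdiff)
      also have "\<dots> \<le> R * sqrt (gram_form \<sigma> (kdiff (ps k) (ps l)))"
        unfolding R_def by (rule abs_kev_gaussK_le[OF z sb])
      also have "\<dots> \<le> R * e"
      proof -
        have "sqrt (gram_form \<sigma> (kdiff (ps k) (ps l))) < e" using N l unfolding k_def knorm_gaussK_eq by auto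
        then show ?thesis using R0 by (intro mult_left_mono) auto
      qed
      finally show "\<bar>kev (gaussK \<sigma>) (ps l) z - kev (gaussK \<sigma>) (ps k) z\<bar> \<le> R * e" .
    qed
    ultimately show ?thesis by (intro LIMSEQ_le_const2) auto
  qed
  then show ?thesis using Q1 unfolding R_def by blast
qed

section \<open>Metric entropy of the unit ball\<close>

definition grid :: "real \<Rightarrow> real \<Rightarrow> nat \<Rightarrow> real set" where
  "grid R h J = (\<lambda>j. - R + real j * h) ` {..J}"

lemma finite_grid [simp]: "finite (grid R h J)"
  unfolding grid_def by simp

lemma card_grid_le: "card (grid R h J) \<le> J + 1"
  unfolding grid_def using card_image_le[of "{..J}" "\<lambda>j. - R + real j * h"] by simp

lemma grid_rounding:
  fixes R h D :: real
  assumes h: "h > 0" and D: "\<bar>D\<bar> \<le> R"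
  shows "\<exists>v\<in>grid R h (nat \<lceil>2 * R / h\<rceil>). \<bar>D - v\<bar> \<le> h"
proof -
  define j where "j = nat \<lfloor>(D + R) / h\<rfloor>"
  have "(D + R) / h \<ge> 0" using D h by auto
  then have rj: "real j = of_int \<lfloor>(D + R) / h\<rfloor>" unfolding j_def by simp
  have a: "real j \<le> (D + R) / h" unfolding rj by linarith
  have b: "(D + R) / h < real j + 1" unfolding rj by linarith
  have "(D + R) / h \<le> 2 * R / h" using D h by (simp add: divide_right_mono)
  then have "real j \<le> of_int \<lceil>2 * R / h\<rceil>" using a by linarith
  then have "j \<in> {..nat \<lceil>2 * R / h\<rceil>}" by simp
  moreover have "real j * h \<le> D + R" using a h by (simp add: field_simps)
  moreover have "D + R < (real j + 1) * h" using b h by (simp add: field_simps)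
  ultimately show ?thesis unfolding grid_def by (intro bexI[of _ "- R + real j * h"]) (auto simp: algebra_simps)
qed

lemma continuous_gauss_poly: "continuous_on UNIV (gauss_poly \<sigma> d g)"
  unfolding gauss_poly_def[abs_def]
  by (intro continuous_on_mult continuous_gauss_weight continuous_on_sum continuous_on_const continuous_monomial)

lemma abs_gauss_poly_diff_le:
  fixes z :: "real^'n::finite"
  assumes z: "z \<in> cube" and ab: "\<forall>\<alpha>\<in>exponents_below d. \<bar>a \<alpha> - b \<alpha>\<bar> \<le> h"
  shows "\<bar>gauss_poly \<sigma> d a z - gauss_poly \<sigma> d b z\<bar> \<le> real d ^ CARD('n) * h"
proof -
  have "\<bar>gauss_poly \<sigma> d a z - gauss_poly \<sigma> d b z\<bar>
      = gauss_weight \<sigma> z * \<bar>\<Sum>\<alpha>\<in>exponents_below d. (a \<alpha> - b \<alpha>) * monomial z \<alpha>\<bar>"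
    unfolding gauss_poly_def using gauss_weight_pos[of \<sigma> z]
    by (simp add: abs_mult right_diff_distrib[symmetric] sum_subtractf left_diff_distrib)
  also have "\<dots> \<le> 1 * (\<Sum>\<alpha>\<in>(exponents_below d :: ('n \<Rightarrow> nat) set). h)"
  proof (rule mult_mono)
    have "\<bar>(a \<alpha> - b \<alpha>) * monomial z \<alpha>\<bar> \<le> h" if "\<alpha> \<in> exponents_below d" for \<alpha>
      using that ab abs_monomial_le_1[OF z, of \<alpha>] mult_mono[of "\<bar>a \<alpha> - b \<alpha>\<bar>" h "\<bar>monomial z \<alpha>\<bar>" 1]
      by (auto simp: abs_mult)
    then show "\<bar>\<Sum>\<alpha>\<in>exponents_below d. (a \<alpha> - b \<alpha>) * monomial z \<alpha>\<bar> \<le> (\<Sum>\<alpha>\<in>(exponents_below d :: ('n \<Rightarrow> nat) set). h)"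
      by (intro order_trans[OF sum_abs] sum_mono)
  qed (use gauss_weight_le_1[of \<sigma> z] in auto)
  also have "\<dots> = real d ^ CARD('n) * h" by (simp add: card_exponents_below)
  finally show ?thesis .
qed

text \<open>The coefficients of the truncated expansion of an element of the unit ball are bounded by
  \<open>R\<close>, so rounding them to the grid of mesh \<open>h\<close> costs \<open>d\<^sup>n h = \<epsilon>/4\<close>; the tail and the
  approximation of \<open>f\<close> by a finite kernel combination cost another \<open>\<epsilon>/4\<close> each.\<close>

lemma rkhs_ball_near_gauss_poly:
  fixes f :: "real^'n::finite \<Rightarrow> real" and \<sigma> \<epsilon> :: real and d :: nat
  assumes sig: "\<sigma> > 0" and eps: "\<epsilon> > 0" and d: "d > 0"
    and dc: "4 * exp 1 * growth_const \<sigma> TYPE('n) \<le> real d"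
    and small: "2 * sqrt (exp 1 * growth_const \<sigma> TYPE('n) / real d) ^ d \<le> \<epsilon> / 4"
    and f: "f \<in> rkhs_ball (gaussK \<sigma>) cube"
  defines "R \<equiv> \<Sum>k. sqrt_exp_term (growth_const \<sigma> TYPE('n)) k"
    and "h \<equiv> \<epsilon> / (4 * real d ^ CARD('n))"
  shows "\<exists>g\<in>exponents_below d \<rightarrow>\<^sub>E grid R h (nat \<lceil>2 * R / h\<rceil>).
           \<forall>z\<in>cube. \<bar>f z - gauss_poly \<sigma> d g z\<bar> \<le> 3 * \<epsilon> / 4"
proof -
  have sb: "summable (sqrt_exp_term (growth_const \<sigma> TYPE('n)))"
    by (rule summable_sqrt_exp_term[OF growth_const_pos[OF sig]])
  have R0: "R \<ge> 0" unfolding R_def by (rule suminf_sqrt_exp_term_nonneg[OF growth_const_pos[OF sig]])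
  have h0: "h > 0" unfolding h_def using eps d by simp
  define e where "e = \<epsilon> / (4 * (R + 1))"
  have e0: "e > 0" unfolding e_def using eps R0 by simp
  have Re: "R * e \<le> \<epsilon> / 4" unfolding e_def using R0 eps by (simp add: field_simps)
  obtain ps :: "(real \<times> (real^'n)) list" where Q1: "gram_form \<sigma> ps \<le> 1"
    and app: "\<forall>z\<in>cube. \<bar>f z - kev (gaussK \<sigma>) ps z\<bar> \<le> R * e"
    using rkhs_ball_approx[OF sig f e0] unfolding R_def by blast
  have "\<bar>head_coeff \<sigma> ps d \<alpha>\<bar> \<le> R" for \<alpha>
  proof -
    have "\<bar>head_coeff \<sigma> ps d \<alpha>\<bar> \<le> R * sqrt (gram_form \<sigma> ps)"
      unfolding R_def by (rule abs_head_coeff_le[OF sig sb])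
    also have "\<dots> \<le> R * 1" using Q1 R0 by (intro mult_left_mono) auto
    finally show ?thesis by simp
  qed
  then have "\<forall>\<alpha>\<in>exponents_below d. \<exists>v\<in>grid R h (nat \<lceil>2 * R / h\<rceil>). \<bar>head_coeff \<sigma> ps d \<alpha> - v\<bar> \<le> h"
    using grid_rounding[OF h0] by blast
  then obtain r where r: "\<forall>\<alpha>\<in>exponents_below d.
      r \<alpha> \<in> grid R h (nat \<lceil>2 * R / h\<rceil>) \<and> \<bar>head_coeff \<sigma> ps d \<alpha> - r \<alpha>\<bar> \<le> h"
    by metis
  define g where "g = restrict r (exponents_below d)"
  have "\<bar>f z - gauss_poly \<sigma> d g z\<bar> \<le> 3 * \<epsilon> / 4" if z: "z \<in> cube" for z
  proof -
    have "\<bar>gauss_poly \<sigma> d (head_coeff \<sigma> ps d) z - gauss_poly \<sigma> d g z\<bar> \<le> real d ^ CARD('n) * h"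
      using r unfolding g_def by (intro abs_gauss_poly_diff_le[OF z]) auto
    also have "\<dots> = \<epsilon> / 4" unfolding h_def using d by simp
    finally have head: "\<bar>gauss_poly \<sigma> d (head_coeff \<sigma> ps d) z - gauss_poly \<sigma> d g z\<bar> \<le> \<epsilon> / 4" .
    have "\<bar>\<Sum>k. kev_term \<sigma> ps z (k + d)\<bar> \<le> \<epsilon> / 4"
      by (rule abs_kev_tail_le_of_cutoff[OF sig z d dc small Q1])
    moreover have "\<bar>f z - kev (gaussK \<sigma>) ps z\<bar> \<le> \<epsilon> / 4" using app z Re by fastforce
    ultimately show ?thesis using head kev_gaussK_split[of \<sigma> ps z d] by linarith
  qed
  moreover have "g \<in> exponents_below d \<rightarrow>\<^sub>E grid R h (nat \<lceil>2 * R / h\<rceil>)"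
    unfolding g_def using r by auto
  ultimately show ?thesis by blast
qed

lemma ln_of_nat_nonneg: "0 \<le> ln (real n)"
  by (cases "n = 0") auto

lemma entropy_C_nonneg: "0 \<le> entropy_C \<epsilon> A \<Omega>"
  unfolding entropy_C_def by (rule ln_of_nat_nonneg)

lemma entropy_C_le_ln_card:
  assumes "finite C" "\<forall>c\<in>C. continuous_on \<Omega> c"
    and "\<forall>f\<in>A. \<exists>c\<in>C. \<exists>\<delta><\<epsilon>. \<forall>x\<in>\<Omega>. \<bar>f x - c x\<bar> \<le> \<delta>"
  shows "entropy_C \<epsilon> A \<Omega> \<le> ln (card C)"
proof -
  define L where "L = (LEAST N. \<exists>C. finite C \<and> card C = N \<and> (\<forall>c\<in>C. continuous_on \<Omega> c)
       \<and> (\<forall>f\<in>A. \<exists>c\<in>C. \<exists>\<delta><\<epsilon>. \<forall>x\<in>\<Omega>. \<bar>f x - c x\<bar> \<le> \<delta>))"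
  have "L \<le> card C" unfolding L_def by (rule Least_le) (use assms in blast)
  then show ?thesis unfolding entropy_C_def L_def[symmetric] using ln_of_nat_nonneg[of "card C"] by (cases "L = 0") auto
qed

lemma entropy_C_gauss_le:
  fixes \<sigma> \<epsilon> :: real and d :: nat
  assumes sig: "\<sigma> > 0" and eps: "\<epsilon> > 0" and d: "d > 0"
    and dc: "4 * exp 1 * growth_const \<sigma> TYPE('n::finite) \<le> real d"
    and small: "2 * sqrt (exp 1 * growth_const \<sigma> TYPE('n) / real d) ^ d \<le> \<epsilon> / 4"
  shows "entropy_C \<epsilon> (rkhs_ball (gaussK \<sigma> :: real^'n \<Rightarrow> real^'n \<Rightarrow> real) cube) cube
          \<le> real d ^ CARD('n) * ln (8 * (\<Sum>k. sqrt_exp_term (growth_const \<sigma> TYPE('n)) k) * real d ^ CARD('n) / \<epsilon> + 2)"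
proof -
  define R where "R = (\<Sum>k. sqrt_exp_term (growth_const \<sigma> TYPE('n)) k)"
  define h where "h = \<epsilon> / (4 * real d ^ CARD('n))"
  define J where "J = nat \<lceil>2 * R / h\<rceil>"
  define C :: "(real^'n \<Rightarrow> real) set"
    where "C = gauss_poly \<sigma> d ` (exponents_below d \<rightarrow>\<^sub>E grid R h J)"
  have R0: "R \<ge> 0" unfolding R_def by (rule suminf_sqrt_exp_term_nonneg[OF growth_const_pos[OF sig]])
  have h0: "h > 0" unfolding h_def using eps d by simp
  have fC: "finite C" unfolding C_def by (intro finite_imageI finite_PiE) auto
  have "entropy_C \<epsilon> (rkhs_ball (gaussK \<sigma> :: real^'n \<Rightarrow> real^'n \<Rightarrow> real) cube) cube \<le> ln (card C)"
  proof (rule entropy_C_le_ln_card)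
    show "finite C" by (rule fC)
    show "\<forall>c\<in>C. continuous_on cube c"
      unfolding C_def using continuous_gauss_poly continuous_on_subset by blast
    show "\<forall>f\<in>rkhs_ball (gaussK \<sigma>) cube. \<exists>c\<in>C. \<exists>\<delta><\<epsilon>. \<forall>x\<in>cube. \<bar>f x - c x\<bar> \<le> \<delta>"
    proof
      fix f :: "real^'n \<Rightarrow> real" assume "f \<in> rkhs_ball (gaussK \<sigma>) cube"
      from rkhs_ball_near_gauss_poly[OF sig eps d dc small this] obtain g
        where "g \<in> exponents_below d \<rightarrow>\<^sub>E grid R h J" "\<forall>z\<in>cube. \<bar>f z - gauss_poly \<sigma> d g z\<bar> \<le> 3 * \<epsilon> / 4"
        unfolding R_def h_def J_def by blast
      moreover have "3 * \<epsilon> / 4 < \<epsilon>" using eps by simp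
      ultimately show "\<exists>c\<in>C. \<exists>\<delta><\<epsilon>. \<forall>x\<in>cube. \<bar>f x - c x\<bar> \<le> \<delta>" unfolding C_def by blast
    qed
  qed
  also have "ln (card C) \<le> ln (real (J + 1) ^ (d ^ CARD('n)))"
  proof -
    have "card C \<le> card ((exponents_below d :: ('n \<Rightarrow> nat) set) \<rightarrow>\<^sub>E grid R h J)"
      unfolding C_def by (rule card_image_le) (auto intro: finite_PiE)
    also have "\<dots> = card (grid R h J) ^ (d ^ CARD('n))" by (simp add: card_PiE card_exponents_below)
    also have "\<dots> \<le> (J + 1) ^ (d ^ CARD('n))" by (intro power_mono card_grid_le) simp
    finally have "real (card C) \<le> real (J + 1) ^ (d ^ CARD('n))" by (metis of_nat_le_iff of_nat_power)
    moreover have "C \<noteq> {}" unfolding C_def grid_def by (auto simp: PiE_eq_empty_iff)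
    then have "card C > 0" using fC by (simp add: card_gt_0_iff)
    ultimately show ?thesis by (intro ln_mono) auto
  qed
  also have "\<dots> = real d ^ CARD('n) * ln (real (J + 1))" by (simp add: ln_realpow)
  also have "\<dots> \<le> real d ^ CARD('n) * ln (8 * R * real d ^ CARD('n) / \<epsilon> + 2)"
  proof -
    have "2 * R / h \<ge> 0" using R0 h0 by simp
    then have "real J \<le> 2 * R / h + 1" unfolding J_def
      using of_int_ceiling_le_add_one[of "2 * R / h"] by linarith
    also have "2 * R / h = 8 * R * real d ^ CARD('n) / \<epsilon>" unfolding h_def using eps d by (simp add: field_simps)
    finally show ?thesis by (intro mult_left_mono ln_mono) auto
  qed
  finally show ?thesis unfolding R_def .
qed

section \<open>The integral operator\<close>

lemma L2_on_integrable:
  assumes \<Omega>: "\<Omega> \<in> lmeasurable" and \<phi>: "L2_on \<Omega> \<phi>"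
  shows "integrable (lebesgue_on \<Omega>) \<phi>"
proof (rule Bochner_Integration.integrable_bound[where f="\<lambda>x. 1 + (\<phi> x)\<^sup>2"])
  have "integrable (lebesgue_on \<Omega>) (\<lambda>x. 1::real)"
    by (rule finite_measure.integrable_const[OF finite_measure_lebesgue_on[OF \<Omega>]])
  then show "integrable (lebesgue_on \<Omega>) (\<lambda>x. 1 + (\<phi> x)\<^sup>2)" using \<phi> unfolding L2_on_def by simp
  show "\<phi> \<in> borel_measurable (lebesgue_on \<Omega>)" using \<phi> unfolding L2_on_def by simp
  have "\<bar>t\<bar> \<le> 1 + t\<^sup>2" for t :: real
    using sum_squares_bound[of 1 "\<bar>t\<bar>"] by simp
  then show "AE x in lebesgue_on \<Omega>. norm (\<phi> x) \<le> norm (1 + (\<phi> x)\<^sup>2)" by simp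
qed

lemma L2_on_mult_integrable:
  assumes "L2_on \<Omega> \<phi>" "L2_on \<Omega> \<psi>"
  shows "integrable (lebesgue_on \<Omega>) (\<lambda>x. \<phi> x * \<psi> x)"
proof (rule Bochner_Integration.integrable_bound[where f="\<lambda>x. (\<phi> x)\<^sup>2 + (\<psi> x)\<^sup>2"])
  show "integrable (lebesgue_on \<Omega>) (\<lambda>x. (\<phi> x)\<^sup>2 + (\<psi> x)\<^sup>2)" using assms unfolding L2_on_def by simp
  show "(\<lambda>x. \<phi> x * \<psi> x) \<in> borel_measurable (lebesgue_on \<Omega>)"
    using assms unfolding L2_on_def by (auto intro: borel_measurable_times)
  have "\<bar>s * t\<bar> \<le> s\<^sup>2 + t\<^sup>2" for s t :: real
  proof -
    have "2 * \<bar>s\<bar> * \<bar>t\<bar> \<le> s\<^sup>2 + t\<^sup>2" using sum_squares_bound[of "\<bar>s\<bar>" "\<bar>t\<bar>"] by simp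
    moreover have "0 \<le> \<bar>s\<bar> * \<bar>t\<bar>" by simp
    ultimately show ?thesis unfolding abs_mult by linarith
  qed
  then show "AE x in lebesgue_on \<Omega>. norm (\<phi> x * \<psi> x) \<le> norm ((\<phi> x)\<^sup>2 + (\<psi> x)\<^sup>2)" by simp
qed

lemma sums_integral_dominated:
  fixes f :: "nat \<Rightarrow> 'a \<Rightarrow> real"
  assumes f: "\<And>k. integrable M (f k)" and h: "integrable M h" and c: "summable c"
    and bound: "\<And>k x. x \<in> space M \<Longrightarrow> \<bar>f k x\<bar> \<le> c k * h x"
  shows "(\<lambda>k. integral\<^sup>L M (f k)) sums (\<integral>x. (\<Sum>k. f k x) \<partial>M)"
    and "integrable M (\<lambda>x. \<Sum>k. f k x)"
proof -
  have pointwise: "AE x in M. summable (\<lambda>k. norm (f k x))"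
  proof (rule AE_I2)
    fix x assume "x \<in> space M"
    then show "summable (\<lambda>k. norm (f k x))"
      using bound by (intro summable_comparison_test[OF _ summable_mult2[OF c, of "h x"]]) auto
  qed
  have integrals: "summable (\<lambda>k. \<integral>x. norm (f k x) \<partial>M)"
  proof (rule summable_comparison_test[OF _ summable_mult2[OF c, of "\<integral>x. h x \<partial>M"]], intro exI allI impI)
    fix k :: nat
    have "(\<integral>x. norm (f k x) \<partial>M) \<le> (\<integral>x. c k * h x \<partial>M)"
      using f h bound by (intro integral_mono) auto
    then show "norm (\<integral>x. norm (f k x) \<partial>M) \<le> c k * (\<integral>x. h x \<partial>M)" by simp
  qed
  show "(\<lambda>k. integral\<^sup>L M (f k)) sums (\<integral>x. (\<Sum>k. f k x) \<partial>M)"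
    by (rule sums_integral[OF f pointwise integrals])
  show "integrable M (\<lambda>x. \<Sum>k. f k x)"
    by (rule integrable_suminf[OF f pointwise integrals])
qed

lemma integrable_bounded_continuous_mult:
  fixes g \<phi> :: "real^'n::finite \<Rightarrow> real"
  assumes "integrable cube_measure \<phi>" "continuous_on UNIV g" "\<And>x. x \<in> cube \<Longrightarrow> \<bar>g x\<bar> \<le> B"
  shows "integrable cube_measure (\<lambda>x. g x * \<phi> x)"
proof (rule Bochner_Integration.integrable_bound[where f="\<lambda>x. B * \<phi> x"])
  show "integrable cube_measure (\<lambda>x. B * \<phi> x)" using assms by simp
  show "(\<lambda>x. g x * \<phi> x) \<in> borel_measurable cube_measure"
    using continuous_imp_measurable_cube[OF assms(2)] borel_measurable_integrable[OF assms(1)] by measurable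
  show "AE x in cube_measure. norm (g x * \<phi> x) \<le> norm (B * \<phi> x)"
  proof (rule AE_I2)
    fix x :: "real^'n" assume "x \<in> space cube_measure"
    then have x: "x \<in> cube" by simp
    have "\<bar>g x\<bar> * \<bar>\<phi> x\<bar> \<le> B * \<bar>\<phi> x\<bar>" using assms(3)[OF x] by (intro mult_right_mono) auto
    moreover have "B \<ge> 0" using assms(3)[OF x] by linarith
    ultimately show "norm (g x * \<phi> x) \<le> norm (B * \<phi> x)" by (simp add: abs_mult)
  qed
qed

definition word_moment :: "real \<Rightarrow> (nat \<Rightarrow> 'n) \<Rightarrow> nat \<Rightarrow> (real^'n::finite \<Rightarrow> real) \<Rightarrow> real" where
  "word_moment \<sigma> s k \<phi> = (LINT y | cube_measure. gauss_weight \<sigma> y * word_monomial y s k * \<phi> y)"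

definition moment :: "real \<Rightarrow> ('n \<Rightarrow> nat) \<Rightarrow> (real^'n::finite \<Rightarrow> real) \<Rightarrow> real" where
  "moment \<sigma> \<alpha> \<phi> = (LINT y | cube_measure. gauss_weight \<sigma> y * monomial y \<alpha> * \<phi> y)"

lemma word_moment_eq_moment: "word_moment \<sigma> s k \<phi> = moment \<sigma> (word_exponent s k) \<phi>"
  unfolding word_moment_def moment_def word_monomial_eq_monomial ..

lemma continuous_weighted_word_monomial: "continuous_on UNIV (\<lambda>y. gauss_weight \<sigma> y * word_monomial y s k)"
  by (intro continuous_on_mult continuous_gauss_weight continuous_word_monomial)

lemma abs_weighted_word_monomial_le_1: "y \<in> cube \<Longrightarrow> \<bar>gauss_weight \<sigma> y * word_monomial y s k\<bar> \<le> 1"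
  using gauss_weight_pos[of \<sigma> y] gauss_weight_le_1[of \<sigma> y] abs_word_monomial_le_1[of y s k]
  by (simp add: abs_mult mult_le_one)

lemma weighted_word_monomial_integrable: "integrable cube_measure \<phi> \<Longrightarrow> integrable cube_measure (\<lambda>y. gauss_weight \<sigma> y * word_monomial y s k * \<phi> y)"
  by (rule integrable_bounded_continuous_mult[OF _ continuous_weighted_word_monomial abs_weighted_word_monomial_le_1])

lemma abs_word_moment_le:
  assumes "integrable cube_measure (\<phi> :: real^'n::finite \<Rightarrow> real)"
  shows "\<bar>word_moment \<sigma> s k \<phi>\<bar> \<le> (LINT y | cube_measure. \<bar>\<phi> y\<bar>)"
proof -
  have "\<bar>word_moment \<sigma> s k \<phi>\<bar> \<le> (LINT y | cube_measure. \<bar>gauss_weight \<sigma> y * word_monomial y s k * \<phi> y\<bar>)"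
    unfolding word_moment_def by (rule integral_abs_bound)
  also have "\<dots> \<le> (LINT y | cube_measure. \<bar>\<phi> y\<bar>)"
  proof (rule integral_mono)
    show "integrable cube_measure (\<lambda>y. \<bar>gauss_weight \<sigma> y * word_monomial y s k * \<phi> y\<bar>)" using weighted_word_monomial_integrable[OF assms] by simp
    show "integrable cube_measure (\<lambda>y. \<bar>\<phi> y\<bar>)" using assms by simp
    fix y :: "real^'n" assume "y \<in> space cube_measure"
    then have "\<bar>gauss_weight \<sigma> y * word_monomial y s k\<bar> \<le> 1" by (intro abs_weighted_word_monomial_le_1) simp
    then show "\<bar>gauss_weight \<sigma> y * word_monomial y s k * \<phi> y\<bar> \<le> \<bar>\<phi> y\<bar>"
      by (simp add: abs_mult mult_left_le_one_le)
  qed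
  finally show ?thesis .
qed

lemma sum_abs_word_monomial_le:
  assumes "x \<in> cube"
  shows "(\<Sum>s\<in>words k. \<bar>word_monomial (x :: real^'n::finite) s k\<bar> * c) \<le> real CARD('n) ^ k * \<bar>c\<bar>"
proof -
  have "(\<Sum>s\<in>words k. \<bar>word_monomial (x :: real^'n::finite) s k\<bar> * c) \<le> (\<Sum>s\<in>(words k :: (nat \<Rightarrow> 'n) set). \<bar>c\<bar>)"
  proof (rule sum_mono)
    fix s
    have "\<bar>word_monomial x s k\<bar> * c \<le> \<bar>word_monomial x s k\<bar> * \<bar>c\<bar>" by (intro mult_left_mono) auto
    also have "\<dots> \<le> 1 * \<bar>c\<bar>" using abs_word_monomial_le_1[OF assms] by (intro mult_right_mono) auto
    finally show "\<bar>word_monomial x s k\<bar> * c \<le> \<bar>c\<bar>" by simp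
  qed
  also have "\<dots> = real CARD('n) ^ k * \<bar>c\<bar>" by (simp add: card_words)
  finally show ?thesis .
qed

lemma intop_gaussK_sums:
  fixes \<phi> :: "real^'n::finite \<Rightarrow> real"
  assumes int: "integrable cube_measure \<phi>" and x: "x \<in> cube"
  shows "(\<lambda>k. gauss_weight \<sigma> x * (exp_coeff \<sigma> k * (\<Sum>s\<in>words k. word_monomial x s k * word_moment \<sigma> s k \<phi>))) sums intop (gaussK \<sigma>) cube \<phi> x"
proof -
  define f where "f k y = (\<Sum>s\<in>words k. (gauss_weight \<sigma> x * exp_coeff \<sigma> k * word_monomial x s k) * (gauss_weight \<sigma> y * word_monomial y s k * \<phi> y))" for k y
  have fint: "integrable cube_measure (f k)" for k
    unfolding f_def[abs_def] apply (rule Bochner_Integration.integrable_sum) apply (rule integrable_mult_right) by (rule weighted_word_monomial_integrable[OF int])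
  have fsum: "(\<lambda>k. f k y) sums (gaussK \<sigma> x y * \<phi> y)" for y
  proof -
    have "(\<lambda>k. gauss_weight \<sigma> x * gauss_weight \<sigma> y * (exp_coeff \<sigma> k * (\<Sum>s\<in>words k. word_monomial x s k * word_monomial y s k)) * \<phi> y) sums (gaussK \<sigma> x y * \<phi> y)"
      by (intro sums_mult2 gaussK_sums)
    moreover have "(\<lambda>k. gauss_weight \<sigma> x * gauss_weight \<sigma> y * (exp_coeff \<sigma> k * (\<Sum>s\<in>words k. word_monomial x s k * word_monomial y s k)) * \<phi> y) = (\<lambda>k. f k y)"
      unfolding f_def by (auto simp: sum_distrib_left sum_distrib_right algebra_simps intro!: sum.cong ext)
    ultimately show ?thesis by simp
  qed
  have fbound: "\<bar>f k y\<bar> \<le> exp_coeff \<sigma> k * real CARD('n) ^ k * \<bar>\<phi> y\<bar>" if y: "y \<in> cube" for k y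
  proof -
    have "\<bar>f k y\<bar> \<le> (\<Sum>s\<in>words k. \<bar>(gauss_weight \<sigma> x * exp_coeff \<sigma> k * word_monomial x s k) * (gauss_weight \<sigma> y * word_monomial y s k * \<phi> y)\<bar>)"
      unfolding f_def by (rule sum_abs)
    also have "\<dots> \<le> (\<Sum>s\<in>words k. exp_coeff \<sigma> k * (\<bar>word_monomial x s k\<bar> * \<bar>\<phi> y\<bar>))"
    proof (rule sum_mono)
      fix s
      have a: "\<bar>gauss_weight \<sigma> y * word_monomial y s k * \<phi> y\<bar> \<le> \<bar>\<phi> y\<bar>"
        using abs_weighted_word_monomial_le_1[OF y, of \<sigma> s k] by (simp add: abs_mult mult_left_le_one_le)
      have "\<bar>(gauss_weight \<sigma> x * exp_coeff \<sigma> k * word_monomial x s k) * (gauss_weight \<sigma> y * word_monomial y s k * \<phi> y)\<bar>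
          = gauss_weight \<sigma> x * (exp_coeff \<sigma> k * \<bar>word_monomial x s k\<bar>) * \<bar>gauss_weight \<sigma> y * word_monomial y s k * \<phi> y\<bar>"
        using gauss_weight_pos[of \<sigma> x] exp_coeff_nonneg[of \<sigma> k] by (simp add: abs_mult)
      also have "\<dots> \<le> 1 * (exp_coeff \<sigma> k * \<bar>word_monomial x s k\<bar>) * \<bar>\<phi> y\<bar>"
        using gauss_weight_le_1[of \<sigma> x] exp_coeff_nonneg[of \<sigma> k] a by (intro mult_mono) auto
      finally show "\<bar>(gauss_weight \<sigma> x * exp_coeff \<sigma> k * word_monomial x s k) * (gauss_weight \<sigma> y * word_monomial y s k * \<phi> y)\<bar> \<le> exp_coeff \<sigma> k * (\<bar>word_monomial x s k\<bar> * \<bar>\<phi> y\<bar>)"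
        by simp
    qed
    also have "\<dots> = exp_coeff \<sigma> k * (\<Sum>s\<in>words k. \<bar>word_monomial x s k\<bar> * \<bar>\<phi> y\<bar>)" by (simp add: sum_distrib_left)
    also have "\<dots> \<le> exp_coeff \<sigma> k * (real CARD('n) ^ k * \<bar>\<bar>\<phi> y\<bar>\<bar>)"
      by (intro mult_left_mono sum_abs_word_monomial_le[OF x] exp_coeff_nonneg)
    finally show ?thesis by simp
  qed
  have "(\<lambda>k. integral\<^sup>L cube_measure (f k)) sums (LINT y|cube_measure. (\<Sum>k. f k y))"
    using fbound by (intro sums_integral_dominated(1)[OF fint integrable_abs[OF int] summable_exp_coeff]) simp
  moreover have "(LINT y|cube_measure. (\<Sum>k. f k y)) = intop (gaussK \<sigma>) cube \<phi> x"
    unfolding intop_def using fsum by (intro Bochner_Integration.integral_cong) (auto simp: sums_iff)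
  moreover have "integral\<^sup>L cube_measure (f k) = gauss_weight \<sigma> x * (exp_coeff \<sigma> k * (\<Sum>s\<in>words k. word_monomial x s k * word_moment \<sigma> s k \<phi>))" for k
  proof -
    have "integral\<^sup>L cube_measure (f k) = (\<Sum>s\<in>words k. (gauss_weight \<sigma> x * exp_coeff \<sigma> k * word_monomial x s k) * word_moment \<sigma> s k \<phi>)"
      unfolding f_def word_moment_def
      by (subst Bochner_Integration.integral_sum) (auto intro: integrable_mult_right weighted_word_monomial_integrable int)
    then show ?thesis by (simp add: sum_distrib_left algebra_simps)
  qed
  ultimately show ?thesis by simp
qed

lemma quad_form_sums:
  fixes \<phi> \<psi> :: "real^'n::finite \<Rightarrow> real"
  assumes i\<phi>: "integrable cube_measure \<phi>" and i\<psi>: "integrable cube_measure \<psi>"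
  shows "(\<lambda>k. exp_coeff \<sigma> k * (\<Sum>s\<in>words k. word_moment \<sigma> s k \<phi> * word_moment \<sigma> s k \<psi>)) sums (LINT x|cube_measure. \<psi> x * intop (gaussK \<sigma>) cube \<phi> x)"
    and "(\<lambda>x. \<psi> x * intop (gaussK \<sigma>) cube \<phi> x) \<in> borel_measurable cube_measure"
proof -
  define g where "g k x = (\<Sum>s\<in>words k. (exp_coeff \<sigma> k * word_moment \<sigma> s k \<phi>) * (gauss_weight \<sigma> x * word_monomial x s k * \<psi> x))" for k x
  define I where "I = (LINT y|cube_measure. \<bar>\<phi> y\<bar>)"
  have gint: "integrable cube_measure (g k)" for k
    unfolding g_def[abs_def] apply (rule Bochner_Integration.integrable_sum) apply (rule integrable_mult_right) by (rule weighted_word_monomial_integrable[OF i\<psi>])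
  have gsum: "(\<lambda>k. g k x) sums (\<psi> x * intop (gaussK \<sigma>) cube \<phi> x)" if x: "x \<in> cube" for x
  proof -
    have "(\<lambda>k. \<psi> x * (gauss_weight \<sigma> x * (exp_coeff \<sigma> k * (\<Sum>s\<in>words k. word_monomial x s k * word_moment \<sigma> s k \<phi>)))) sums (\<psi> x * intop (gaussK \<sigma>) cube \<phi> x)"
      by (intro sums_mult intop_gaussK_sums[OF i\<phi> x])
    moreover have "(\<lambda>k. \<psi> x * (gauss_weight \<sigma> x * (exp_coeff \<sigma> k * (\<Sum>s\<in>words k. word_monomial x s k * word_moment \<sigma> s k \<phi>)))) = (\<lambda>k. g k x)"
      unfolding g_def by (auto simp: sum_distrib_left algebra_simps intro!: sum.cong ext)
    ultimately show ?thesis by simp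
  qed
  have gbound: "\<bar>g k x\<bar> \<le> exp_coeff \<sigma> k * real CARD('n) ^ k * I * \<bar>\<psi> x\<bar>" if x: "x \<in> cube" for k x
  proof -
    have "\<bar>g k x\<bar> \<le> (\<Sum>s\<in>words k. \<bar>(exp_coeff \<sigma> k * word_moment \<sigma> s k \<phi>) * (gauss_weight \<sigma> x * word_monomial x s k * \<psi> x)\<bar>)"
      unfolding g_def by (rule sum_abs)
    also have "\<dots> \<le> (\<Sum>s\<in>(words k :: (nat \<Rightarrow> 'n) set). exp_coeff \<sigma> k * I * \<bar>\<psi> x\<bar>)"
    proof (rule sum_mono)
      fix s
      have a: "\<bar>gauss_weight \<sigma> x * word_monomial x s k * \<psi> x\<bar> \<le> \<bar>\<psi> x\<bar>"
        using abs_weighted_word_monomial_le_1[OF x, of \<sigma> s k] by (simp add: abs_mult mult_left_le_one_le)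
      have b: "\<bar>exp_coeff \<sigma> k * word_moment \<sigma> s k \<phi>\<bar> \<le> exp_coeff \<sigma> k * I"
        unfolding I_def using abs_word_moment_le[OF i\<phi>, of \<sigma> s k] exp_coeff_nonneg[of \<sigma> k] by (simp add: abs_mult mult_left_mono)
      show "\<bar>(exp_coeff \<sigma> k * word_moment \<sigma> s k \<phi>) * (gauss_weight \<sigma> x * word_monomial x s k * \<psi> x)\<bar> \<le> exp_coeff \<sigma> k * I * \<bar>\<psi> x\<bar>"
        unfolding abs_mult[of "exp_coeff \<sigma> k * word_moment \<sigma> s k \<phi>"] by (rule mult_mono[OF b a]) (use exp_coeff_nonneg[of \<sigma> k] in \<open>auto simp: I_def\<close>)
    qed
    also have "\<dots> = exp_coeff \<sigma> k * real CARD('n) ^ k * I * \<bar>\<psi> x\<bar>" by (simp add: card_words)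
    finally show ?thesis .
  qed
  have c: "summable (\<lambda>k. exp_coeff \<sigma> k * real CARD('n) ^ k * I)"
    by (rule summable_mult2[OF summable_exp_coeff])
  note dominated = sums_integral_dominated[OF gint integrable_abs[OF i\<psi>] c]
  have "(\<lambda>k. integral\<^sup>L cube_measure (g k)) sums (LINT x|cube_measure. (\<Sum>k. g k x))"
    using gbound by (intro dominated(1)) simp
  moreover have eqc: "(LINT x|cube_measure. (\<Sum>k. g k x)) = (LINT x|cube_measure. \<psi> x * intop (gaussK \<sigma>) cube \<phi> x)"
    using gsum by (intro Bochner_Integration.integral_cong) (auto simp: sums_iff)
  moreover have "integral\<^sup>L cube_measure (g k) = exp_coeff \<sigma> k * (\<Sum>s\<in>words k. word_moment \<sigma> s k \<phi> * word_moment \<sigma> s k \<psi>)" for k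
  proof -
    have "integral\<^sup>L cube_measure (g k) = (\<Sum>s\<in>words k. (exp_coeff \<sigma> k * word_moment \<sigma> s k \<phi>) * word_moment \<sigma> s k \<psi>)"
      unfolding g_def word_moment_def[of _ _ _ \<psi>]
      by (subst Bochner_Integration.integral_sum) (auto intro: integrable_mult_right weighted_word_monomial_integrable i\<psi>)
    then show ?thesis by (simp add: sum_distrib_left algebra_simps)
  qed
  ultimately show "(\<lambda>k. exp_coeff \<sigma> k * (\<Sum>s\<in>words k. word_moment \<sigma> s k \<phi> * word_moment \<sigma> s k \<psi>)) sums (LINT x|cube_measure. \<psi> x * intop (gaussK \<sigma>) cube \<phi> x)"
    by simp
  have "integrable cube_measure (\<lambda>x. (\<Sum>k. g k x))" using gbound by (intro dominated(2)) simp
  then have "(\<lambda>x. (\<Sum>k. g k x)) \<in> borel_measurable cube_measure" by (rule borel_measurable_integrable)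
  then show "(\<lambda>x. \<psi> x * intop (gaussK \<sigma>) cube \<phi> x) \<in> borel_measurable cube_measure"
    by (rule measurable_cong[THEN iffD1, rotated]) (use gsum in \<open>auto simp: sums_iff\<close>)
qed

lemma (in finite_measure) integral_abs_squared_le:
  fixes F :: "'a \<Rightarrow> real"
  assumes V0: "measure M (space M) > 0"
    and iF: "integrable M F" and iF2: "integrable M (\<lambda>x. (F x)\<^sup>2)"
  shows "(\<integral>x. \<bar>F x\<bar> \<partial>M)\<^sup>2 \<le> measure M (space M) * (\<integral>x. (F x)\<^sup>2 \<partial>M)"
proof -
  define V where "V = measure M (space M)"
  define a where "a = (\<integral>x. \<bar>F x\<bar> \<partial>M)"
  define c where "c = a / V"
  have "0 \<le> (\<integral>x. (\<bar>F x\<bar> - c)\<^sup>2 \<partial>M)" by (intro integral_nonneg_AE) auto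
  also have "(\<integral>x. (\<bar>F x\<bar> - c)\<^sup>2 \<partial>M) = (\<integral>x. (F x)\<^sup>2 + (- 2 * c) * \<bar>F x\<bar> + c\<^sup>2 \<partial>M)"
    by (intro Bochner_Integration.integral_cong) (auto simp: power2_eq_square algebra_simps)
  also have "\<dots> = (\<integral>x. (F x)\<^sup>2 \<partial>M) + (- 2 * c) * a + V * c\<^sup>2"
    using iF iF2 unfolding a_def V_def by (simp add: Bochner_Integration.integral_add)
  finally have "0 \<le> (\<integral>x. (F x)\<^sup>2 \<partial>M) - a\<^sup>2 / V"
    unfolding c_def using V0 unfolding V_def[symmetric] by (simp add: power2_eq_square field_simps)
  then show ?thesis using V0 unfolding a_def V_def[symmetric] by (simp add: field_simps)
qed

lemma eigen_quad_form:
  fixes \<phi> \<psi> :: "real^'n::finite \<Rightarrow> real"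
  assumes "L2_on cube \<phi>" "L2_on cube \<psi>"
    and eig: "AE x in cube_measure. intop (gaussK \<sigma>) cube \<phi> x = \<mu> * \<phi> x"
  shows "(LINT x|cube_measure. \<psi> x * intop (gaussK \<sigma>) cube \<phi> x) = \<mu> * (LINT x|cube_measure. \<phi> x * \<psi> x)"
proof -
  have i: "integrable cube_measure \<phi>" "integrable cube_measure \<psi>" using assms L2_on_integrable[OF cube_lmeasurable] by auto
  have "(LINT x|cube_measure. \<psi> x * intop (gaussK \<sigma>) cube \<phi> x) = (LINT x|cube_measure. \<mu> * (\<phi> x * \<psi> x))"
  proof (rule integral_cong_AE)
    show "(\<lambda>x. \<psi> x * intop (gaussK \<sigma>) cube \<phi> x) \<in> borel_measurable cube_measure" by (rule quad_form_sums(2)[OF i])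
    show "(\<lambda>x. \<mu> * (\<phi> x * \<psi> x)) \<in> borel_measurable cube_measure"
      using borel_measurable_integrable[OF i(1)] borel_measurable_integrable[OF i(2)] by measurable
    show "AE x in cube_measure. \<psi> x * intop (gaussK \<sigma>) cube \<phi> x = \<mu> * (\<phi> x * \<psi> x)"
      using eig by eventually_elim simp
  qed
  then show ?thesis by simp
qed

lemma quad_form_sym:
  fixes \<phi> \<psi> :: "real^'n::finite \<Rightarrow> real"
  assumes "integrable cube_measure \<phi>" "integrable cube_measure \<psi>"
  shows "(LINT x|cube_measure. \<psi> x * intop (gaussK \<sigma>) cube \<phi> x) = (LINT x|cube_measure. \<phi> x * intop (gaussK \<sigma>) cube \<psi> x)"
proof -
  have "(\<lambda>k. exp_coeff \<sigma> k * (\<Sum>s\<in>words k. word_moment \<sigma> s k \<phi> * word_moment \<sigma> s k \<psi>)) sums (LINT x|cube_measure. \<psi> x * intop (gaussK \<sigma>) cube \<phi> x)"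
    by (rule quad_form_sums(1)[OF assms])
  moreover have "(\<lambda>k. exp_coeff \<sigma> k * (\<Sum>s\<in>words k. word_moment \<sigma> s k \<psi> * word_moment \<sigma> s k \<phi>)) sums (LINT x|cube_measure. \<phi> x * intop (gaussK \<sigma>) cube \<psi> x)"
    by (rule quad_form_sums(1)[OF assms(2,1)])
  ultimately show ?thesis by (simp add: mult.commute sums_unique2)
qed

lemma eigenfunctions_orthogonal:
  fixes \<phi> \<psi> :: "real^'n::finite \<Rightarrow> real"
  assumes "L2_on cube \<phi>" "L2_on cube \<psi>"
    and "AE x in cube_measure. intop (gaussK \<sigma>) cube \<phi> x = \<mu> * \<phi> x"
    and "AE x in cube_measure. intop (gaussK \<sigma>) cube \<psi> x = \<nu> * \<psi> x"
    and "\<mu> \<noteq> \<nu>"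
  shows "(LINT x|cube_measure. \<phi> x * \<psi> x) = 0"
proof -
  have i: "integrable cube_measure \<phi>" "integrable cube_measure \<psi>" using assms L2_on_integrable[OF cube_lmeasurable] by auto
  have "\<mu> * (LINT x|cube_measure. \<phi> x * \<psi> x) = \<nu> * (LINT x|cube_measure. \<psi> x * \<phi> x)"
    using eigen_quad_form[OF assms(1,2,3)] eigen_quad_form[OF assms(2,1,4)] quad_form_sym[OF i] by simp
  then show ?thesis using assms(5) by (simp add: mult.commute)
qed

section \<open>Counting large eigenvalues\<close>

lemma word_moment_sum:
  assumes i\<psi>: "\<And>p. p \<in> J \<Longrightarrow> integrable cube_measure (\<psi> p)"
  shows "word_moment \<sigma> s k (\<lambda>y. \<Sum>p\<in>J. t p * \<psi> p y) = (\<Sum>p\<in>J. t p * word_moment \<sigma> s k (\<psi> p))"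
proof -
  have "word_moment \<sigma> s k (\<lambda>y. \<Sum>p\<in>J. t p * \<psi> p y)
      = (LINT y|cube_measure. (\<Sum>p\<in>J. t p * (gauss_weight \<sigma> y * word_monomial y s k * \<psi> p y)))"
    unfolding word_moment_def by (simp add: sum_distrib_left algebra_simps)
  also have "\<dots> = (\<Sum>p\<in>J. t p * word_moment \<sigma> s k (\<psi> p))"
    unfolding word_moment_def
    by (simp add: Bochner_Integration.integral_sum integrable_mult_right weighted_word_monomial_integrable i\<psi>)
  finally show ?thesis .
qed

lemma quad_form_combination:
  fixes \<psi> :: "'p \<Rightarrow> real^'n::finite \<Rightarrow> real" and t :: "'p \<Rightarrow> real"
  assumes i\<psi>: "\<And>p. p \<in> J \<Longrightarrow> integrable cube_measure (\<psi> p)"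
  defines "F \<equiv> \<lambda>y. \<Sum>p\<in>J. t p * \<psi> p y"
  shows "(LINT x|cube_measure. F x * intop (gaussK \<sigma>) cube F x)
       = (\<Sum>p\<in>J. \<Sum>q\<in>J. t p * t q * (LINT x|cube_measure. \<psi> q x * intop (gaussK \<sigma>) cube (\<psi> p) x))"
proof -
  have iF: "integrable cube_measure F" unfolding F_def
    by (intro Bochner_Integration.integrable_sum integrable_mult_right i\<psi>)
  have UF: "word_moment \<sigma> s k F = (\<Sum>p\<in>J. t p * word_moment \<sigma> s k (\<psi> p))" for s k
    unfolding F_def by (rule word_moment_sum[OF i\<psi>])
  define w where "w k = exp_coeff \<sigma> k * (\<Sum>s\<in>words k. (\<Sum>p\<in>J. t p * word_moment \<sigma> s k (\<psi> p))\<^sup>2)" for k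
  have "w sums (LINT x|cube_measure. F x * intop (gaussK \<sigma>) cube F x)"
    using quad_form_sums(1)[OF iF iF, of \<sigma>] unfolding UF w_def power2_eq_square .
  moreover have "w sums (\<Sum>p\<in>J. \<Sum>q\<in>J. t p * t q * (LINT x|cube_measure. \<psi> q x * intop (gaussK \<sigma>) cube (\<psi> p) x))"
  proof -
    have "(\<lambda>k. \<Sum>p\<in>J. \<Sum>q\<in>J. t p * t q * (exp_coeff \<sigma> k * (\<Sum>s\<in>words k. word_moment \<sigma> s k (\<psi> p) * word_moment \<sigma> s k (\<psi> q))))
        sums (\<Sum>p\<in>J. \<Sum>q\<in>J. t p * t q * (LINT x|cube_measure. \<psi> q x * intop (gaussK \<sigma>) cube (\<psi> p) x))"
      by (intro sums_sum sums_mult quad_form_sums(1) i\<psi>)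
    moreover have "(\<Sum>p\<in>J. \<Sum>q\<in>J. t p * t q * (exp_coeff \<sigma> k * (\<Sum>s\<in>words k. word_moment \<sigma> s k (\<psi> p) * word_moment \<sigma> s k (\<psi> q))))
        = w k" for k
    proof -
      have "w k = (\<Sum>s\<in>words k. \<Sum>p\<in>J. \<Sum>q\<in>J. exp_coeff \<sigma> k * ((t q * word_moment \<sigma> s k (\<psi> q)) * (t p * word_moment \<sigma> s k (\<psi> p))))"
        unfolding w_def power2_eq_square sum_distrib_right sum_distrib_left ..
      also have "\<dots> = (\<Sum>p\<in>J. \<Sum>q\<in>J. \<Sum>s\<in>words k. exp_coeff \<sigma> k * ((t q * word_moment \<sigma> s k (\<psi> q)) * (t p * word_moment \<sigma> s k (\<psi> p))))"
        by (rule sum_swap3[symmetric])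
      also have "\<dots> = (\<Sum>p\<in>J. \<Sum>q\<in>J. t p * t q * (exp_coeff \<sigma> k * (\<Sum>s\<in>words k. word_moment \<sigma> s k (\<psi> p) * word_moment \<sigma> s k (\<psi> q))))"
        by (intro sum.cong refl) (simp add: sum_distrib_left algebra_simps)
      finally show ?thesis by simp
    qed
    ultimately show ?thesis by simp
  qed
  ultimately show ?thesis by (rule sums_unique2)
qed

text \<open>Only the terms of degree \<open>\<ge> d\<close> of the series for the quadratic form survive, and each
  moment is bounded through Cauchy--Schwarz on the cube, whose volume is \<open>2\<^sup>n\<close>.\<close>

lemma quad_form_le_if_low_word_moments_vanish:
  fixes F :: "real^'n::finite \<Rightarrow> real"
  assumes iF: "integrable cube_measure F" and iF2: "integrable cube_measure (\<lambda>x. (F x)\<^sup>2)"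
    and vanish: "\<And>s k. k < d \<Longrightarrow> word_moment \<sigma> s k F = 0"
  shows "(LINT x|cube_measure. F x * intop (gaussK \<sigma>) cube F x)
       \<le> (\<Sum>k. exp_coeff \<sigma> (k + d) * real CARD('n) ^ (k + d)) * (2 ^ CARD('n) * (LINT x|cube_measure. (F x)\<^sup>2))"
proof -
  define T where "T = 2 ^ CARD('n) * (LINT x|cube_measure. (F x)\<^sup>2)"
  define w where "w k = exp_coeff \<sigma> k * (\<Sum>s\<in>words k. (word_moment \<sigma> s k F)\<^sup>2)" for k
  have wX: "w sums (LINT x|cube_measure. F x * intop (gaussK \<sigma>) cube F x)"
    using quad_form_sums(1)[OF iF iF, of \<sigma>] unfolding w_def power2_eq_square .
  have moment_bound: "(word_moment \<sigma> s k F)\<^sup>2 \<le> T" for s k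
  proof -
    have "\<bar>word_moment \<sigma> s k F\<bar> \<le> (LINT x|cube_measure. \<bar>F x\<bar>)" by (rule abs_word_moment_le[OF iF])
    then have "(word_moment \<sigma> s k F)\<^sup>2 \<le> (LINT x|cube_measure. \<bar>F x\<bar>)\<^sup>2"
      by (metis abs_ge_zero abs_le_square_iff order_trans power2_abs abs_of_nonneg)
    also have "\<dots> \<le> T"
      using finite_measure.integral_abs_squared_le[OF finite_measure_cube _ iF iF2]
      unfolding T_def by (simp add: measure_cube)
    finally show ?thesis .
  qed
  have w_le: "w k \<le> exp_coeff \<sigma> k * real CARD('n) ^ k * T" for k
  proof -
    have "w k \<le> exp_coeff \<sigma> k * (\<Sum>s\<in>(words k :: (nat \<Rightarrow> 'n) set). T)"
      unfolding w_def by (intro mult_left_mono sum_mono moment_bound exp_coeff_nonneg)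
    then show ?thesis by (simp add: card_words)
  qed
  have sA: "summable (\<lambda>k. exp_coeff \<sigma> (k + d) * real CARD('n) ^ (k + d))"
    using summable_ignore_initial_segment[OF summable_exp_coeff[of \<sigma> "real CARD('n)"], of d] by simp
  have sw: "summable w" using wX by (rule sums_summable)
  have "(LINT x|cube_measure. F x * intop (gaussK \<sigma>) cube F x) = (\<Sum>k. w (k + d)) + (\<Sum>k<d. w k)"
    using wX suminf_split_initial_segment[OF sw, of d] by (simp add: sums_iff)
  also have "(\<Sum>k<d. w k) = 0" unfolding w_def using vanish by simp
  also have "(\<Sum>k. w (k + d)) \<le> (\<Sum>k. exp_coeff \<sigma> (k + d) * real CARD('n) ^ (k + d) * T)"
    by (intro suminf_le w_le summable_mult2 sA) (use sw in \<open>simp add: summable_iff_shift\<close>)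
  also have "\<dots> = (\<Sum>k. exp_coeff \<sigma> (k + d) * real CARD('n) ^ (k + d)) * T"
    by (rule suminf_mult2[OF sA, symmetric])
  finally show ?thesis unfolding T_def by simp
qed

lemma orthonormal_combination_square:
  fixes \<psi> :: "'p \<Rightarrow> real^'n \<Rightarrow> real" and t :: "'p \<Rightarrow> real"
  assumes fJ: "finite J" and L2: "\<forall>p\<in>J. L2_on \<Omega> (\<psi> p)"
    and on: "\<forall>p\<in>J. \<forall>q\<in>J. (LINT x|lebesgue_on \<Omega>. \<psi> p x * \<psi> q x) = (if p = q then 1 else 0)"
  shows "integrable (lebesgue_on \<Omega>) (\<lambda>x. (\<Sum>p\<in>J. t p * \<psi> p x)\<^sup>2)"
    and "(LINT x|lebesgue_on \<Omega>. (\<Sum>p\<in>J. t p * \<psi> p x)\<^sup>2) = (\<Sum>p\<in>J. (t p)\<^sup>2)"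
proof -
  have i\<psi>2: "integrable (lebesgue_on \<Omega>) (\<lambda>x. \<psi> p x * \<psi> q x)" if "p \<in> J" "q \<in> J" for p q
    using L2 that L2_on_mult_integrable by blast
  have sq: "(\<Sum>p\<in>J. t p * \<psi> p x)\<^sup>2 = (\<Sum>p\<in>J. \<Sum>q\<in>J. t p * t q * (\<psi> p x * \<psi> q x))" for x
    unfolding power2_eq_square sum_distrib_left sum_distrib_right
    by (intro sum.cong refl) (simp add: algebra_simps)
  show "integrable (lebesgue_on \<Omega>) (\<lambda>x. (\<Sum>p\<in>J. t p * \<psi> p x)\<^sup>2)" unfolding sq
    by (intro Bochner_Integration.integrable_sum integrable_mult_right i\<psi>2)
  have "(LINT x|lebesgue_on \<Omega>. (\<Sum>p\<in>J. t p * \<psi> p x)\<^sup>2)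
      = (\<Sum>p\<in>J. \<Sum>q\<in>J. t p * t q * (LINT x|lebesgue_on \<Omega>. \<psi> p x * \<psi> q x))"
    unfolding sq by (simp add: Bochner_Integration.integral_sum integrable_mult_right i\<psi>2)
  also have "\<dots> = (\<Sum>p\<in>J. \<Sum>q\<in>J. if p = q then t p * t q else 0)"
    using on by (intro sum.cong refl) auto
  also have "\<dots> = (\<Sum>p\<in>J. (t p)\<^sup>2)" using fJ by (simp add: power2_eq_square)
  finally show "(LINT x|lebesgue_on \<Omega>. (\<Sum>p\<in>J. t p * \<psi> p x)\<^sup>2) = (\<Sum>p\<in>J. (t p)\<^sup>2)" .
qed

lemma quad_form_orthonormal_eigen_combination:
  fixes \<psi> :: "'p \<Rightarrow> real^'n::finite \<Rightarrow> real" and \<mu> t :: "'p \<Rightarrow> real"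
  assumes fJ: "finite J" and L2: "\<forall>p\<in>J. L2_on cube (\<psi> p)"
    and eig: "\<forall>p\<in>J. AE x in cube_measure. intop (gaussK \<sigma>) cube (\<psi> p) x = \<mu> p * \<psi> p x"
    and on: "\<forall>p\<in>J. \<forall>q\<in>J. (LINT x|cube_measure. \<psi> p x * \<psi> q x) = (if p = q then 1 else 0)"
  defines "F \<equiv> \<lambda>y. \<Sum>p\<in>J. t p * \<psi> p y"
  shows "(LINT x|cube_measure. F x * intop (gaussK \<sigma>) cube F x) = (\<Sum>p\<in>J. (t p)\<^sup>2 * \<mu> p)"
proof -
  have i\<psi>: "integrable cube_measure (\<psi> p)" if "p \<in> J" for p
    using L2 that L2_on_integrable[OF cube_lmeasurable] by auto
  have "(LINT x|cube_measure. \<psi> q x * intop (gaussK \<sigma>) cube (\<psi> p) x) = \<mu> p * (if p = q then 1 else 0)"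
    if "p \<in> J" "q \<in> J" for p q
    using eigen_quad_form[of "\<psi> p" "\<psi> q" \<sigma> "\<mu> p"] L2 eig on that by auto
  moreover have "(LINT x|cube_measure. F x * intop (gaussK \<sigma>) cube F x)
      = (\<Sum>p\<in>J. \<Sum>q\<in>J. t p * t q * (LINT x|cube_measure. \<psi> q x * intop (gaussK \<sigma>) cube (\<psi> p) x))"
    unfolding F_def by (rule quad_form_combination[OF i\<psi>])
  ultimately have "(LINT x|cube_measure. F x * intop (gaussK \<sigma>) cube F x)
      = (\<Sum>p\<in>J. \<Sum>q\<in>J. if p = q then t p * t q * \<mu> p else 0)"
    by (auto intro!: sum.cong)
  also have "\<dots> = (\<Sum>p\<in>J. (t p)\<^sup>2 * \<mu> p)" using fJ by (simp add: power2_eq_square)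
  finally show ?thesis .
qed

lemma card_orthonormal_eigenfunctions_le:
  fixes \<sigma> \<epsilon> :: real and d :: nat and J :: "'p set"
    and \<psi> :: "'p \<Rightarrow> real^'n::finite \<Rightarrow> real" and \<mu> :: "'p \<Rightarrow> real"
  assumes fJ: "finite J"
    and L2: "\<forall>p\<in>J. L2_on cube (\<psi> p)"
    and eig: "\<forall>p\<in>J. AE x in cube_measure. intop (gaussK \<sigma>) cube (\<psi> p) x = \<mu> p * \<psi> p x"
    and gt: "\<forall>p\<in>J. \<mu> p > \<epsilon>"
    and on: "\<forall>p\<in>J. \<forall>q\<in>J. (LINT x|cube_measure. \<psi> p x * \<psi> q x) = (if p = q then 1 else 0)"
    and tail: "2 ^ CARD('n) * (\<Sum>k. exp_coeff \<sigma> (k + d) * real CARD('n) ^ (k + d)) \<le> \<epsilon>"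
  shows "card J \<le> d ^ CARD('n)"
proof (rule ccontr)
  assume "\<not> card J \<le> d ^ CARD('n)"
  then have "card (exponents_below d :: ('n \<Rightarrow> nat) set) < card J" by (simp add: card_exponents_below)
  then obtain t where t0: "\<exists>p\<in>J. t p \<noteq> 0"
    and vanish: "\<forall>\<alpha>\<in>exponents_below d. (\<Sum>p\<in>J. t p * moment \<sigma> \<alpha> (\<psi> p)) = 0"
    using nontrivial_combination_vanishing[OF finite_exponents_below fJ, where v="\<lambda>p \<alpha>. moment \<sigma> \<alpha> (\<psi> p)"]
    by blast
  define F where "F = (\<lambda>y. \<Sum>p\<in>J. t p * \<psi> p y)"
  define T where "T = (\<Sum>p\<in>J. (t p)\<^sup>2)"
  have T0: "T > 0" unfolding T_def using t0 fJ by (auto intro: sum_pos2)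
  have i\<psi>: "integrable cube_measure (\<psi> p)" if "p \<in> J" for p
    using L2 that L2_on_integrable[OF cube_lmeasurable] by auto
  have iF: "integrable cube_measure F" unfolding F_def
    by (intro Bochner_Integration.integrable_sum integrable_mult_right i\<psi>)
  have iF2: "integrable cube_measure (\<lambda>x. (F x)\<^sup>2)" and norm_F: "(LINT x|cube_measure. (F x)\<^sup>2) = T"
    using orthonormal_combination_square[OF fJ L2 on, of t] unfolding F_def T_def by simp_all
  have "(LINT x|cube_measure. F x * intop (gaussK \<sigma>) cube F x) = (\<Sum>p\<in>J. (t p)\<^sup>2 * \<mu> p)"
    unfolding F_def by (rule quad_form_orthonormal_eigen_combination[OF fJ L2 eig on])
  moreover have "\<epsilon> * T < (\<Sum>p\<in>J. (t p)\<^sup>2 * \<mu> p)"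
  proof -
    obtain p0 where p0: "p0 \<in> J" "t p0 \<noteq> 0" using t0 by blast
    have "0 < (\<Sum>p\<in>J. (t p)\<^sup>2 * (\<mu> p - \<epsilon>))"
      using fJ gt p0 by (intro sum_pos2[of J p0]) auto
    then show ?thesis unfolding T_def by (simp add: algebra_simps sum_subtractf sum_distrib_left)
  qed
  moreover have "(LINT x|cube_measure. F x * intop (gaussK \<sigma>) cube F x) \<le> \<epsilon> * T"
  proof -
    have "word_moment \<sigma> s k F = (\<Sum>p\<in>J. t p * word_moment \<sigma> s k (\<psi> p))" for s k
      unfolding F_def by (rule word_moment_sum[OF i\<psi>])
    then have "word_moment \<sigma> s k F = 0" if "k < d" for s k
      using vanish word_exponent_in_exponents_below[OF that] by (simp add: word_moment_eq_moment) blast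
    then have "(LINT x|cube_measure. F x * intop (gaussK \<sigma>) cube F x)
        \<le> (\<Sum>k. exp_coeff \<sigma> (k + d) * real CARD('n) ^ (k + d)) * (2 ^ CARD('n) * T)"
      using quad_form_le_if_low_word_moments_vanish[OF iF iF2] norm_F by simp
    also have "\<dots> \<le> \<epsilon> * T" using tail T0 by (simp add: mult_right_mono algebra_simps)
    finally show ?thesis .
  qed
  ultimately show False by simp
qed

text \<open>\<open>eigenvalue_seq\<close> only provides orthonormality within each eigenspace; across eigenspaces
  it comes from the symmetry of the operator, see \<open>eigenfunctions_orthogonal\<close>.\<close>

lemma eigenvalue_seq_orthonormal_family:
  fixes K :: "real^'n \<Rightarrow> real^'n \<Rightarrow> real" and lam :: "nat \<Rightarrow> real"
  assumes ev: "eigenvalue_seq K \<Omega> lam" and eps: "\<epsilon> \<ge> 0"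
    and I: "finite I" "I \<subseteq> {i. lam i > \<epsilon>}"
  obtains J :: "(real \<times> nat) set" and \<psi> :: "real \<times> nat \<Rightarrow> real^'n \<Rightarrow> real"
  where "finite J" "card I \<le> card J"
    and "\<And>p. p \<in> J \<Longrightarrow> fst p > \<epsilon> \<and> L2_on \<Omega> (\<psi> p)
            \<and> (AE x in lebesgue_on \<Omega>. intop K \<Omega> (\<psi> p) x = fst p * \<psi> p x)"
    and "\<And>p q. p \<in> J \<Longrightarrow> q \<in> J \<Longrightarrow> fst p = fst q \<Longrightarrow>
            (LINT x|lebesgue_on \<Omega>. \<psi> p x * \<psi> q x) = (if p = q then 1 else 0)"
proof -
  define Ms where "Ms = lam ` I"
  define c where "c \<mu> = card {i. lam i = \<mu>}" for \<mu>
  have Ms_gt: "\<mu> > \<epsilon>" if "\<mu> \<in> Ms" for \<mu> using that I unfolding Ms_def by auto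
  have evd: "finite {i. lam i = \<mu>} \<and> has_k_orth_eigenfuns K \<Omega> \<mu> (c \<mu>)" if "\<mu> \<in> Ms" for \<mu>
    using ev Ms_gt[OF that] eps unfolding eigenvalue_seq_def c_def by auto
  then have "\<forall>\<mu>\<in>Ms. \<exists>\<phi> :: nat \<Rightarrow> real^'n \<Rightarrow> real.
        (\<forall>j<c \<mu>. L2_on \<Omega> (\<phi> j) \<and> (AE x in lebesgue_on \<Omega>. intop K \<Omega> (\<phi> j) x = \<mu> * \<phi> j x))
      \<and> (\<forall>j<c \<mu>. \<forall>l<c \<mu>. (LINT x|lebesgue_on \<Omega>. \<phi> j x * \<phi> l x) = (if j = l then 1 else 0))"
    unfolding has_k_orth_eigenfuns_def by blast
  then obtain \<Phi> :: "real \<Rightarrow> nat \<Rightarrow> real^'n \<Rightarrow> real" where \<Phi>: "\<forall>\<mu>\<in>Ms.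
        (\<forall>j<c \<mu>. L2_on \<Omega> (\<Phi> \<mu> j) \<and> (AE x in lebesgue_on \<Omega>. intop K \<Omega> (\<Phi> \<mu> j) x = \<mu> * \<Phi> \<mu> j x))
      \<and> (\<forall>j<c \<mu>. \<forall>l<c \<mu>. (LINT x|lebesgue_on \<Omega>. \<Phi> \<mu> j x * \<Phi> \<mu> l x) = (if j = l then 1 else 0))"
    by (rule bchoice[THEN exE]) blast
  define J where "J = Sigma Ms (\<lambda>\<mu>. {..<c \<mu>})"
  define \<psi> where "\<psi> p = \<Phi> (fst p) (snd p)" for p
  have fMs: "finite Ms" unfolding Ms_def using I by simp
  have "card I = (\<Sum>\<mu>\<in>Ms. card {i\<in>I. lam i = \<mu>})"
    unfolding Ms_def using card_eq_sum[of I] sum.group[of I "lam ` I" lam "\<lambda>_. 1::nat"] I by simp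
  also have "\<dots> \<le> (\<Sum>\<mu>\<in>Ms. c \<mu>)"
    using evd unfolding c_def by (intro sum_mono card_mono) auto
  also have "\<dots> = card J" unfolding J_def using fMs by (simp add: card_SigmaI)
  finally have "card I \<le> card J" .
  moreover have "finite J" unfolding J_def using fMs by simp
  ultimately have J: "finite J" "card I \<le> card J" by auto
  have "fst p > \<epsilon> \<and> L2_on \<Omega> (\<psi> p) \<and> (AE x in lebesgue_on \<Omega>. intop K \<Omega> (\<psi> p) x = fst p * \<psi> p x)"
    if "p \<in> J" for p
    using \<Phi> Ms_gt that unfolding J_def \<psi>_def by auto
  moreover have "(LINT x|lebesgue_on \<Omega>. \<psi> p x * \<psi> q x) = (if p = q then 1 else 0)"
    if "p \<in> J" "q \<in> J" "fst p = fst q" for p q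
    using \<Phi> that unfolding J_def \<psi>_def by (cases p, cases q) auto
  ultimately show ?thesis by (rule that[OF J])
qed

lemma eigenvalue_count_le:
  fixes \<sigma> \<epsilon> :: real and d :: nat and lam :: "nat \<Rightarrow> real"
  assumes ev: "eigenvalue_seq (gaussK \<sigma> :: real^'n::finite \<Rightarrow> real^'n \<Rightarrow> real) cube lam"
    and eps: "\<epsilon> > 0"
    and tail: "2 ^ CARD('n) * (\<Sum>k. exp_coeff \<sigma> (k + d) * real CARD('n) ^ (k + d)) \<le> \<epsilon>"
  shows "finite {i. lam i > \<epsilon>}" and "card {i. lam i > \<epsilon>} \<le> d ^ CARD('n)"
proof -
  have bounded: "card I \<le> d ^ CARD('n)" if I: "finite I" "I \<subseteq> {i. lam i > \<epsilon>}" for I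
  proof -
    obtain J and \<psi> :: "real \<times> nat \<Rightarrow> real^'n \<Rightarrow> real" where J: "finite J" "card I \<le> card J"
      and eig: "\<And>p. p \<in> J \<Longrightarrow> fst p > \<epsilon> \<and> L2_on cube (\<psi> p)
                  \<and> (AE x in cube_measure. intop (gaussK \<sigma>) cube (\<psi> p) x = fst p * \<psi> p x)"
      and same: "\<And>p q. p \<in> J \<Longrightarrow> q \<in> J \<Longrightarrow> fst p = fst q \<Longrightarrow>
                  (LINT x|cube_measure. \<psi> p x * \<psi> q x) = (if p = q then 1 else 0)"
      by (rule eigenvalue_seq_orthonormal_family[OF ev less_imp_le[OF eps] I]) blast
    have on: "\<forall>p\<in>J. \<forall>q\<in>J. (LINT x|cube_measure. \<psi> p x * \<psi> q x) = (if p = q then 1 else 0)"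
    proof (intro ballI)
      fix p q assume pq: "p \<in> J" "q \<in> J"
      show "(LINT x|cube_measure. \<psi> p x * \<psi> q x) = (if p = q then 1 else 0)"
      proof (cases "fst p = fst q")
        case True
        then show ?thesis using same pq by blast
      next
        case False
        then have "(LINT x|cube_measure. \<psi> p x * \<psi> q x) = 0"
          using eig pq by (intro eigenfunctions_orthogonal[of _ _ \<sigma> "fst p" "fst q"]) auto
        then show ?thesis using False by auto
      qed
    qed
    have "card J \<le> d ^ CARD('n)"
      by (rule card_orthonormal_eigenfunctions_le[where \<mu>=fst, OF J(1) _ _ _ on tail]) (use eig in simp_all)
    with J show ?thesis by simp
  qed
  show fin: "finite {i. lam i > \<epsilon>}"
  proof (rule ccontr)
    assume "infinite {i. lam i > \<epsilon>}"
    then obtain I where "I \<subseteq> {i. lam i > \<epsilon>}" "finite I" "card I = d ^ CARD('n) + 1"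
      using infinite_arbitrarily_large by blast
    then show False using bounded by fastforce
  qed
  show "card {i. lam i > \<epsilon>} \<le> d ^ CARD('n)" by (rule bounded[OF fin]) simp
qed

section \<open>Choice of the truncation degree\<close>

definition cutoff_bound :: "real \<Rightarrow> real" where
  "cutoff_bound \<epsilon> = 4 * ln (1 / \<epsilon>) / ln (ln (1 / \<epsilon>)) + 1"

definition cutoff_degree :: "real \<Rightarrow> nat" where
  "cutoff_degree \<epsilon> = nat \<lceil>4 * ln (1 / \<epsilon>) / ln (ln (1 / \<epsilon>))\<rceil>"

text \<open>\<open>x \<mapsto> x/2 \<cdot> ln (x/c)\<close> is increasing for \<open>x \<ge> c\<close>, so the bound at \<open>D\<close> transfers to the
  integer \<open>d \<ge> D\<close>, and it says precisely that \<open>ln\<close> of the left-hand side is at most \<open>ln \<epsilon>\<close>.\<close>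

lemma sqrt_power_le_of_log_bound:
  fixes c D b \<epsilon> :: real and d :: nat
  assumes c: "c > 0" and cD: "c < D" and Dd: "D \<le> real d" and eps: "\<epsilon> > 0"
    and log_bound: "ln (1 / \<epsilon>) + b \<le> D / 2 * ln (D / c)"
  shows "exp b * sqrt (c / real d) ^ d \<le> \<epsilon>"
proof -
  have d0: "real d > 0" using c cD Dd by linarith
  have "D / 2 * ln (D / c) \<le> real d / 2 * ln (real d / c)"
  proof (rule mult_mono)
    show "ln (D / c) \<le> ln (real d / c)" using c cD Dd by (intro ln_mono divide_right_mono) auto
    show "0 \<le> ln (D / c)" using c cD by simp
  qed (use Dd d0 in auto)
  with log_bound have bound: "ln (1 / \<epsilon>) + b \<le> real d / 2 * ln (real d / c)" by linarith
  define r where "r = sqrt (c / real d)"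
  have r0: "r > 0" unfolding r_def using c d0 by simp
  have "ln r = - ln (real d / c) / 2"
    unfolding r_def using c d0 by (simp add: ln_sqrt ln_divide_pos)
  moreover have "ln (exp b * r ^ d) = b + real d * ln r"
    using r0 by (simp add: ln_mult ln_realpow)
  ultimately have "ln (exp b * r ^ d) = b - real d / 2 * ln (real d / c)" by simp
  also have "\<dots> \<le> ln \<epsilon>"
  proof -
    have "ln (1 / \<epsilon>) = - ln \<epsilon>" using eps by (simp add: ln_div)
    then show ?thesis using bound by linarith
  qed
  finally show ?thesis unfolding r_def[symmetric] using r0 eps by (subst (asm) ln_le_cancel_iff) auto
qed

lemma eventually_cutoff_degree:
  fixes C :: real and m :: nat
  assumes C: "C > 0"
  shows "\<forall>\<^sub>F \<epsilon> in at_right 0. 0 < \<epsilon> \<and> 1 \<le> ln (1 / \<epsilon>) \<and> 4 * exp 1 * C \<le> real (cutoff_degree \<epsilon>)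
           \<and> 2 ^ m * sqrt (exp 1 * C / real (cutoff_degree \<epsilon>)) ^ cutoff_degree \<epsilon> \<le> \<epsilon>
           \<and> real (cutoff_degree \<epsilon>) \<le> cutoff_bound \<epsilon> \<and> cutoff_bound \<epsilon> \<le> ln (1 / \<epsilon>)"
proof -
  define D where "D \<epsilon> = 4 * ln (1 / \<epsilon>) / ln (ln (1 / \<epsilon>))" for \<epsilon> :: real
  have "\<forall>\<^sub>F \<epsilon> in at_right 0. 4 * exp 1 * C \<le> D \<epsilon>"
    unfolding D_def using C by real_asymp
  moreover have "\<forall>\<^sub>F \<epsilon> in at_right 0. ln (1 / \<epsilon>) + real m * ln 2 \<le> D \<epsilon> / 2 * ln (D \<epsilon> / (exp 1 * C))"
    unfolding D_def using C by real_asymp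
  moreover have "\<forall>\<^sub>F \<epsilon> in at_right 0. D \<epsilon> + 1 \<le> ln (1 / \<epsilon>)" unfolding D_def by real_asymp
  moreover have "\<forall>\<^sub>F \<epsilon> in at_right 0. 1 \<le> ln (1 / \<epsilon>::real)" by real_asymp
  moreover have "\<forall>\<^sub>F \<epsilon> in at_right 0. 0 < (\<epsilon>::real)" by (rule eventually_at_right_less)
  ultimately show ?thesis
  proof eventually_elim
    case (elim \<epsilon>)
    have "0 < exp 1 * C" using C by simp
    moreover have "4 * (exp 1 * C) \<le> D \<epsilon>" using elim by (simp add: mult.assoc)
    ultimately have eC: "exp 1 * C < D \<epsilon>" by linarith
    then have D_le: "D \<epsilon> \<le> real (cutoff_degree \<epsilon>)" and le_D: "real (cutoff_degree \<epsilon>) \<le> D \<epsilon> + 1"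
      unfolding cutoff_degree_def D_def[symmetric] using eC \<open>0 < exp 1 * C\<close> by linarith+
    have "exp (real m * ln 2) * sqrt (exp 1 * C / real (cutoff_degree \<epsilon>)) ^ cutoff_degree \<epsilon> \<le> \<epsilon>"
      using elim eC D_le \<open>0 < exp 1 * C\<close> by (intro sqrt_power_le_of_log_bound[of _ "D \<epsilon>"]) auto
    moreover have "exp (real m * ln 2) = 2 ^ m" by (simp add: exp_of_nat_mult)
    ultimately show ?case using elim D_le le_D unfolding cutoff_bound_def D_def by auto
  qed
qed

lemma tail_bounds_from_cutoff:
  fixes \<sigma> \<epsilon> :: real and d :: nat
  assumes sig: "\<sigma> > 0" and d: "d > 0" and dc: "4 * exp 1 * growth_const \<sigma> TYPE('n::finite) \<le> real d"
    and small: "2 ^ (CARD('n) + 3) * sqrt (exp 1 * growth_const \<sigma> TYPE('n) / real d) ^ d \<le> \<epsilon>"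
  shows "2 ^ CARD('n) * (\<Sum>k. exp_coeff \<sigma> (k + d) * real CARD('n) ^ (k + d)) \<le> \<epsilon>"
    and "2 * sqrt (exp 1 * growth_const \<sigma> TYPE('n) / real d) ^ d \<le> \<epsilon> / 4"
proof -
  define c where "c = growth_const \<sigma> TYPE('n)"
  define r where "r = sqrt (exp 1 * c / real d)"
  define n where "n = CARD('n)"
  have c0: "c > 0" unfolding c_def by (rule growth_const_pos[OF sig])
  note tail = sqrt_exp_term_tail[OF c0 d dc[folded c_def], folded r_def]
  have r0: "r \<ge> 0" unfolding r_def using c0 by simp
  have rd: "r ^ d \<ge> 0" using r0 by simp
  have tb: "exp_coeff \<sigma> k * real n ^ k \<le> sqrt_exp_term c k" if k: "k \<ge> d" for k
  proof -
    have b0: "sqrt_exp_term c k \<ge> 0" using c0 by (simp add: sqrt_exp_term_nonneg)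
    have "sqrt_exp_term c k \<le> r ^ k" unfolding r_def using c0 d k by (rule sqrt_exp_term_le)
    also have "\<dots> \<le> 1" using r0 tail(3)[folded r_def] by (intro power_le_one) auto
    finally have b1: "sqrt_exp_term c k \<le> 1" .
    have "exp_coeff \<sigma> k * real n ^ k \<le> (sqrt_exp_term c k)\<^sup>2"
      unfolding c_def n_def by (rule exp_coeff_mult_power_le)
    also have "\<dots> \<le> sqrt_exp_term c k" using b0 b1 by (simp add: power2_eq_square mult_left_le_one_le)
    finally show ?thesis .
  qed
  have sA: "summable (\<lambda>k. exp_coeff \<sigma> k * real CARD('n) ^ k)" by (rule summable_exp_coeff)
  have sAd: "summable (\<lambda>k. exp_coeff \<sigma> (k + d) * real CARD('n) ^ (k + d))"
    using summable_ignore_initial_segment[OF sA, of d] by simp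
  have sbd: "summable (\<lambda>k. sqrt_exp_term c (k + d))" using summable_ignore_initial_segment[OF tail(1), of d] by simp
  have "(\<Sum>k. exp_coeff \<sigma> (k + d) * real CARD('n) ^ (k + d)) \<le> (\<Sum>k. sqrt_exp_term c (k + d))"
    by (intro suminf_le sAd sbd) (use tb in \<open>simp add: n_def\<close>)
  also have "\<dots> \<le> 2 * r ^ d" using tail(2) unfolding r_def .
  finally have "2 ^ n * (\<Sum>k. exp_coeff \<sigma> (k + d) * real CARD('n) ^ (k + d)) \<le> 2 ^ n * (2 * r ^ d)"
    by (intro mult_left_mono) auto
  also have "\<dots> \<le> 2 ^ (n + 3) * r ^ d" using rd by (simp add: power_add)
  also have "\<dots> \<le> \<epsilon>" using small unfolding r_def c_def n_def .
  finally show "2 ^ CARD('n) * (\<Sum>k. exp_coeff \<sigma> (k + d) * real CARD('n) ^ (k + d)) \<le> \<epsilon>" unfolding n_def .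
  have "2 * r ^ d * 4 \<le> 2 ^ (n + 3) * r ^ d"
  proof -
    have "(8::real) \<le> 2 ^ (n + 3)" by (simp add: power_add)
    then show ?thesis using rd by (simp add: mult_right_mono)
  qed
  then show "2 * sqrt (exp 1 * growth_const \<sigma> TYPE('n) / real d) ^ d \<le> \<epsilon> / 4"
    using small unfolding r_def c_def n_def by simp
qed

lemma eventually_gauss_cutoff:
  fixes \<sigma> :: real
  assumes sig: "\<sigma> > 0"
  shows "\<forall>\<^sub>F \<epsilon> in at_right 0. 0 < \<epsilon> \<and> 1 \<le> ln (1 / \<epsilon>)
           \<and> 4 * exp 1 * growth_const \<sigma> TYPE('n::finite) \<le> real (cutoff_degree \<epsilon>)
           \<and> 2 ^ CARD('n) * (\<Sum>k. exp_coeff \<sigma> (k + cutoff_degree \<epsilon>) * real CARD('n) ^ (k + cutoff_degree \<epsilon>)) \<le> \<epsilon>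
           \<and> 2 * sqrt (exp 1 * growth_const \<sigma> TYPE('n) / real (cutoff_degree \<epsilon>)) ^ cutoff_degree \<epsilon> \<le> \<epsilon> / 4
           \<and> real (cutoff_degree \<epsilon>) \<le> cutoff_bound \<epsilon> \<and> cutoff_bound \<epsilon> \<le> ln (1 / \<epsilon>)"
  using eventually_cutoff_degree[OF growth_const_pos[OF sig, where 'n='n], of "CARD('n) + 3"]
proof eventually_elim
  case (elim \<epsilon>)
  have "0 < 4 * exp 1 * growth_const \<sigma> TYPE('n)" using growth_const_pos[OF sig, where 'n='n] by simp
  then have d0: "cutoff_degree \<epsilon> > 0" using elim by linarith
  have dc: "4 * exp 1 * growth_const \<sigma> TYPE('n) \<le> real (cutoff_degree \<epsilon>)"
    and small: "2 ^ (CARD('n) + 3) * sqrt (exp 1 * growth_const \<sigma> TYPE('n) / real (cutoff_degree \<epsilon>)) ^ cutoff_degree \<epsilon> \<le> \<epsilon>"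
    using elim by simp_all
  show ?case using elim tail_bounds_from_cutoff[OF sig d0 dc small] by simp
qed

lemma eventually_mcount_le:
  fixes \<sigma> :: real and lam :: "nat \<Rightarrow> real"
  assumes sig: "\<sigma> > 0" and ev: "eigenvalue_seq (gaussK \<sigma> :: real^'n::finite \<Rightarrow> real^'n \<Rightarrow> real) cube lam"
  shows "\<forall>\<^sub>F \<epsilon> in at_right 0. 0 < \<epsilon> \<and> 1 \<le> ln (1 / \<epsilon>) \<and> finite {i. lam i > \<epsilon>}
           \<and> real (mcount \<epsilon> lam) \<le> cutoff_bound \<epsilon> ^ CARD('n)"
  using eventually_gauss_cutoff[OF sig, where 'n='n]
proof eventually_elim
  case (elim \<epsilon>)
  then have "finite {i. lam i > \<epsilon>}" "mcount \<epsilon> lam \<le> cutoff_degree \<epsilon> ^ CARD('n)"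
    using eigenvalue_count_le[OF ev] unfolding mcount_def by auto
  moreover have "real (mcount \<epsilon> lam) \<le> real (cutoff_degree \<epsilon>) ^ CARD('n)"
    using \<open>mcount \<epsilon> lam \<le> cutoff_degree \<epsilon> ^ CARD('n)\<close> by (metis of_nat_le_iff of_nat_power)
  moreover have "real (cutoff_degree \<epsilon>) ^ CARD('n) \<le> cutoff_bound \<epsilon> ^ CARD('n)"
    using elim by (intro power_mono) auto
  ultimately show ?case using elim by linarith
qed

lemma mcount_bigo:
  fixes \<sigma> :: real and lam :: "nat \<Rightarrow> real"
  assumes sig: "\<sigma> > 0" and ev: "eigenvalue_seq (gaussK \<sigma> :: real^'n::finite \<Rightarrow> real^'n \<Rightarrow> real) cube lam"
  shows "(\<lambda>\<epsilon>. real (mcount \<epsilon> lam)) \<in> O[at_right 0](\<lambda>\<epsilon>. (ln (1 / \<epsilon>) / ln (ln (1 / \<epsilon>))) ^ CARD('n))"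
proof -
  have "(\<lambda>\<epsilon>. real (mcount \<epsilon> lam)) \<in> O[at_right 0](\<lambda>\<epsilon>. cutoff_bound \<epsilon> ^ CARD('n))"
    by (intro landau_o.big_mono eventually_mono[OF eventually_mcount_le[OF sig ev]]) auto
  also have "cutoff_bound \<in> O[at_right 0](\<lambda>\<epsilon>. ln (1 / \<epsilon>) / ln (ln (1 / \<epsilon>)))"
    unfolding cutoff_bound_def[abs_def] by real_asymp
  then have "(\<lambda>\<epsilon>. cutoff_bound \<epsilon> ^ CARD('n)) \<in> O[at_right 0](\<lambda>\<epsilon>. (ln (1 / \<epsilon>) / ln (ln (1 / \<epsilon>))) ^ CARD('n))"
    by (rule landau_o.big_power)
  finally show ?thesis .
qed

lemma log_power_eq:
  "(\<lambda>\<epsilon>::real. (ln (1 / \<epsilon>) / ln (ln (1 / \<epsilon>))) ^ n * ln (1 / \<epsilon>))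
     = (\<lambda>\<epsilon>. ln (1 / \<epsilon>) ^ (n + 1) / ln (ln (1 / \<epsilon>)) ^ n)"
  by (simp add: power_divide field_simps)

lemma Ecal_le:
  assumes am: "antimono lam" and eps: "\<epsilon> > 0"
  shows "0 \<le> Ecal \<epsilon> lam" and "Ecal \<epsilon> lam \<le> real (mcount \<epsilon> lam) * (\<bar>ln (lam 0)\<bar> + ln (1/\<epsilon>))"
proof -
  show "0 \<le> Ecal \<epsilon> lam" unfolding Ecal_def using eps
    by (intro sum_nonneg) (auto simp: ln_divide_pos)
  have "Ecal \<epsilon> lam \<le> (\<Sum>i\<in>{i. lam i > \<epsilon>}. \<bar>ln (lam 0)\<bar> + ln (1/\<epsilon>))"
    unfolding Ecal_def
  proof (rule sum_mono)
    fix i assume i: "i \<in> {i. lam i > \<epsilon>}"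
    have l0: "lam i \<le> lam 0" using am unfolding antimono_def by auto
    have p: "lam i > 0" "lam 0 > 0" using i eps l0 by auto
    have "ln (lam i / \<epsilon>) \<le> ln (lam 0 / \<epsilon>)" using p eps l0 by (simp add: divide_right_mono)
    also have "\<dots> = ln (lam 0) + ln (1/\<epsilon>)" using p eps by (simp add: ln_divide_pos)
    also have "\<dots> \<le> \<bar>ln (lam 0)\<bar> + ln (1/\<epsilon>)" by simp
    finally show "ln (lam i / \<epsilon>) \<le> \<bar>ln (lam 0)\<bar> + ln (1/\<epsilon>)" .
  qed
  also have "\<dots> = real (mcount \<epsilon> lam) * (\<bar>ln (lam 0)\<bar> + ln (1/\<epsilon>))" unfolding mcount_def by simp
  finally show "Ecal \<epsilon> lam \<le> real (mcount \<epsilon> lam) * (\<bar>ln (lam 0)\<bar> + ln (1/\<epsilon>))" .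
qed

lemma cutoff_bound_bigo: "cutoff_bound \<in> O[at_right 0](\<lambda>\<epsilon>. ln (1 / \<epsilon>) / ln (ln (1 / \<epsilon>)))"
  unfolding cutoff_bound_def[abs_def] by real_asymp

lemma Ecal_bigo:
  fixes \<sigma> :: real and lam :: "nat \<Rightarrow> real"
  assumes sig: "\<sigma> > 0" and ev: "eigenvalue_seq (gaussK \<sigma> :: real^'n::finite \<Rightarrow> real^'n \<Rightarrow> real) cube lam"
  shows "(\<lambda>\<epsilon>. Ecal \<epsilon> lam) \<in> O[at_right 0](\<lambda>\<epsilon>. ln (1 / \<epsilon>) ^ (CARD('n) + 1) / ln (ln (1 / \<epsilon>)) ^ CARD('n))"
proof -
  have am: "antimono lam" using ev unfolding eigenvalue_seq_def by blast
  have "\<forall>\<^sub>F \<epsilon> in at_right 0. norm (Ecal \<epsilon> lam) \<le> norm (real (mcount \<epsilon> lam) * (\<bar>ln (lam 0)\<bar> + ln (1 / \<epsilon>)))"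
    using eventually_at_right_less[of "0::real"]
  proof eventually_elim
    case (elim \<epsilon>)
    then show ?case using Ecal_le[OF am elim] by (simp add: abs_of_nonneg)
  qed
  then have "(\<lambda>\<epsilon>. Ecal \<epsilon> lam) \<in> O[at_right 0](\<lambda>\<epsilon>. real (mcount \<epsilon> lam) * (\<bar>ln (lam 0)\<bar> + ln (1 / \<epsilon>)))"
    by (rule landau_o.big_mono)
  also have "(\<lambda>\<epsilon>. real (mcount \<epsilon> lam) * (\<bar>ln (lam 0)\<bar> + ln (1 / \<epsilon>)))
      \<in> O[at_right 0](\<lambda>\<epsilon>. (ln (1 / \<epsilon>) / ln (ln (1 / \<epsilon>))) ^ CARD('n) * ln (1 / \<epsilon>))"
  proof (rule landau_o.big_mult[OF mcount_bigo[OF sig ev]])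
    have "(\<lambda>\<epsilon>. K + ln (1 / \<epsilon>)) \<in> O[at_right 0](\<lambda>\<epsilon>. ln (1 / \<epsilon>))" for K :: real by real_asymp
    then show "(\<lambda>\<epsilon>. \<bar>ln (lam 0)\<bar> + ln (1 / \<epsilon>)) \<in> O[at_right 0](\<lambda>\<epsilon>. ln (1 / \<epsilon>))" .
  qed
  finally show ?thesis unfolding log_power_eq .
qed

lemma mcount_scaled_bigo:
  fixes \<sigma> \<theta> :: real and lam :: "nat \<Rightarrow> real"
  assumes sig: "\<sigma> > 0" and ev: "eigenvalue_seq (gaussK \<sigma> :: real^'n::finite \<Rightarrow> real^'n \<Rightarrow> real) cube lam"
    and \<theta>: "\<theta> < 1/2"
  shows "(\<lambda>\<epsilon>. real (mcount ((1 - \<theta>) * \<epsilon>) lam))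
           \<in> O[at_right 0](\<lambda>\<epsilon>. ln (1 / \<epsilon>) ^ (CARD('n) + 1) / ln (ln (1 / \<epsilon>)) ^ CARD('n))"
proof -
  have half: "filterlim (\<lambda>\<epsilon>::real. \<epsilon> / 2) (at_right 0) (at_right 0)" by real_asymp
  have "\<forall>\<^sub>F \<epsilon> in at_right 0. norm (real (mcount ((1 - \<theta>) * \<epsilon>) lam)) \<le> norm (real (mcount (\<epsilon> / 2) lam))"
    using eventually_compose_filterlim[OF eventually_mcount_le[OF sig ev] half]
  proof eventually_elim
    case (elim \<epsilon>)
    have "\<theta> * \<epsilon> \<le> 1/2 * \<epsilon>" using elim \<theta> by (intro mult_right_mono) auto
    then have "\<epsilon> / 2 \<le> (1 - \<theta>) * \<epsilon>" by (simp add: algebra_simps)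
    then have "{i. lam i > (1 - \<theta>) * \<epsilon>} \<subseteq> {i. lam i > \<epsilon> / 2}" by auto
    with elim show ?case unfolding mcount_def by (simp add: card_mono)
  qed
  then have "(\<lambda>\<epsilon>. real (mcount ((1 - \<theta>) * \<epsilon>) lam)) \<in> O[at_right 0](\<lambda>\<epsilon>. real (mcount (\<epsilon> / 2) lam))"
    by (rule landau_o.big_mono)
  also have "(\<lambda>\<epsilon>. real (mcount (\<epsilon> / 2) lam))
      \<in> O[at_right 0](\<lambda>\<epsilon>. (ln (1 / (\<epsilon> / 2)) / ln (ln (1 / (\<epsilon> / 2)))) ^ CARD('n))"
    by (rule landau_o.big.compose[OF mcount_bigo[OF sig ev] half])
  also have "(\<lambda>\<epsilon>::real. ln (1 / (\<epsilon> / 2)) / ln (ln (1 / (\<epsilon> / 2))))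
      \<in> O[at_right 0](\<lambda>\<epsilon>. ln (1 / \<epsilon>) / ln (ln (1 / \<epsilon>)))" by real_asymp
  then have "(\<lambda>\<epsilon>::real. (ln (1 / (\<epsilon> / 2)) / ln (ln (1 / (\<epsilon> / 2)))) ^ CARD('n))
      \<in> O[at_right 0](\<lambda>\<epsilon>. (ln (1 / \<epsilon>) / ln (ln (1 / \<epsilon>))) ^ CARD('n))" by (rule landau_o.big_power)
  also have "(\<lambda>\<epsilon>::real. (ln (1 / \<epsilon>) / ln (ln (1 / \<epsilon>))) ^ CARD('n))
      \<in> O[at_right 0](\<lambda>\<epsilon>. (ln (1 / \<epsilon>) / ln (ln (1 / \<epsilon>))) ^ CARD('n) * ln (1 / \<epsilon>))"
    by (rule landau_o.big_mult_1[OF landau_o.big_refl]) real_asymp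
  finally show ?thesis unfolding log_power_eq .
qed

lemma ln_grid_size_le:
  fixes R \<epsilon> :: real and d n :: nat
  assumes R: "R \<ge> 0" and eps: "0 < \<epsilon>" and L1: "1 \<le> ln (1 / \<epsilon>)" and dL: "real d \<le> ln (1 / \<epsilon>)"
  shows "ln (8 * R * real d ^ n / \<epsilon> + 2) \<le> (ln (8 * R + 2) + real n + 1) * ln (1 / \<epsilon>)"
proof -
  define L where "L = ln (1 / \<epsilon>)"
  have "0 \<le> ln (1 / \<epsilon>)" using L1 by linarith
  then have ie: "1 / \<epsilon> \<ge> 1" by (rule ln_ge_zero_imp_ge_one) (use eps in simp)
  have L1: "L \<ge> 1" using L1 unfolding L_def .
  have dL: "real d ^ n \<le> L ^ n" using dL unfolding L_def by (intro power_mono) auto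
  have "8 * R * real d ^ n / \<epsilon> + 2 \<le> (8 * R + 2) * (L ^ n * (1 / \<epsilon>))"
  proof -
    have "8 * R * real d ^ n / \<epsilon> \<le> 8 * R * (L ^ n * (1 / \<epsilon>))"
      using dL R eps by (simp add: divide_right_mono mult_left_mono)
    moreover have "1 * 1 \<le> L ^ n * (1 / \<epsilon>)" using L1 ie by (intro mult_mono) auto
    ultimately show ?thesis by (simp add: algebra_simps)
  qed
  moreover have "0 \<le> 8 * R * real d ^ n / \<epsilon>" using R eps by simp
  ultimately have "ln (8 * R * real d ^ n / \<epsilon> + 2) \<le> ln ((8 * R + 2) * (L ^ n * (1 / \<epsilon>)))"
    by (intro ln_mono) auto
  also have "\<dots> = ln (8 * R + 2) + real n * ln L + L"
  proof -
    have p: "8 * R + 2 > 0" "L ^ n > 0" "1 / \<epsilon> > 0" using R L1 eps by auto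
    then have "ln ((8 * R + 2) * (L ^ n * (1 / \<epsilon>))) = ln (8 * R + 2) + (ln (L ^ n) + ln (1 / \<epsilon>))"
      by (simp only: ln_mult_pos mult_pos_pos)
    also have "ln (L ^ n) = real n * ln L" using L1 by (simp add: ln_realpow)
    finally show ?thesis unfolding L_def by simp
  qed
  also have "\<dots> \<le> ln (8 * R + 2) + real n * L + L" using L1 ln_bound[of L] by (simp add: mult_left_mono)
  also have "\<dots> \<le> (ln (8 * R + 2) + real n + 1) * L"
    using L1 R mult_left_mono[of 1 L "ln (8 * R + 2)"] by (simp add: algebra_simps)
  finally show ?thesis unfolding L_def .
qed

lemma entropy_C_gauss_bigo:
  fixes \<sigma> :: real
  assumes sig: "\<sigma> > 0"
  shows "(\<lambda>\<epsilon>. entropy_C \<epsilon> (rkhs_ball (gaussK \<sigma> :: real^'n::finite \<Rightarrow> real^'n \<Rightarrow> real) cube) cube)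
           \<in> O[at_right 0](\<lambda>\<epsilon>. ln (1 / \<epsilon>) ^ (CARD('n) + 1) / ln (ln (1 / \<epsilon>)) ^ CARD('n))"
proof -
  define R where "R = (\<Sum>k. sqrt_exp_term (growth_const \<sigma> TYPE('n)) k)"
  define K where "K = ln (8 * R + 2) + real CARD('n) + 1"
  have R0: "R \<ge> 0" unfolding R_def by (rule suminf_sqrt_exp_term_nonneg[OF growth_const_pos[OF sig]])
  have "\<forall>\<^sub>F \<epsilon> in at_right 0. norm (entropy_C \<epsilon> (rkhs_ball (gaussK \<sigma> :: real^'n \<Rightarrow> real^'n \<Rightarrow> real) cube) cube)
          \<le> K * norm (cutoff_bound \<epsilon> ^ CARD('n) * ln (1 / \<epsilon>))"
    using eventually_gauss_cutoff[OF sig, where 'n='n]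
  proof eventually_elim
    case (elim \<epsilon>)
    define d where "d = cutoff_degree \<epsilon>"
    have "0 < 4 * exp 1 * growth_const \<sigma> TYPE('n)" using growth_const_pos[OF sig, where 'n='n] by simp
    then have d0: "d > 0" unfolding d_def using elim by linarith
    have "entropy_C \<epsilon> (rkhs_ball (gaussK \<sigma> :: real^'n \<Rightarrow> real^'n \<Rightarrow> real) cube) cube
        \<le> real d ^ CARD('n) * ln (8 * R * real d ^ CARD('n) / \<epsilon> + 2)"
      unfolding R_def d_def using elim d0[unfolded d_def] by (intro entropy_C_gauss_le[OF sig]) auto
    also have "\<dots> \<le> cutoff_bound \<epsilon> ^ CARD('n) * (K * ln (1 / \<epsilon>))"
    proof (rule mult_mono)
      show "real d ^ CARD('n) \<le> cutoff_bound \<epsilon> ^ CARD('n)"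
        unfolding d_def using elim by (intro power_mono) auto
      have "real d \<le> ln (1 / \<epsilon>)" unfolding d_def using elim by linarith
      then show "ln (8 * R * real d ^ CARD('n) / \<epsilon> + 2) \<le> K * ln (1 / \<epsilon>)"
        unfolding K_def using elim R0 by (intro ln_grid_size_le) auto
      show "0 \<le> cutoff_bound \<epsilon> ^ CARD('n)" using elim by simp
      show "0 \<le> ln (8 * R * real d ^ CARD('n) / \<epsilon> + 2)" using elim R0 by simp
    qed
    also have "\<dots> = K * (cutoff_bound \<epsilon> ^ CARD('n) * ln (1 / \<epsilon>))" by simp
    finally have bound: "entropy_C \<epsilon> (rkhs_ball (gaussK \<sigma> :: real^'n \<Rightarrow> real^'n \<Rightarrow> real) cube) cube
        \<le> K * (cutoff_bound \<epsilon> ^ CARD('n) * ln (1 / \<epsilon>))" .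
    have "0 \<le> cutoff_bound \<epsilon>" using elim of_nat_0_le_iff[of "cutoff_degree \<epsilon>"] by linarith
    moreover from elim have "1 \<le> ln (1 / \<epsilon>)" by blast
    ultimately have "0 \<le> cutoff_bound \<epsilon> ^ CARD('n) * ln (1 / \<epsilon>)" by simp
    moreover have "0 \<le> entropy_C \<epsilon> (rkhs_ball (gaussK \<sigma> :: real^'n \<Rightarrow> real^'n \<Rightarrow> real) cube) cube"
      by (rule entropy_C_nonneg)
    ultimately show ?case using bound by simp
  qed
  then have "(\<lambda>\<epsilon>. entropy_C \<epsilon> (rkhs_ball (gaussK \<sigma> :: real^'n \<Rightarrow> real^'n \<Rightarrow> real) cube) cube)
      \<in> O[at_right 0](\<lambda>\<epsilon>. cutoff_bound \<epsilon> ^ CARD('n) * ln (1 / \<epsilon>))" by (rule bigoI)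
  also have "(\<lambda>\<epsilon>. cutoff_bound \<epsilon> ^ CARD('n) * ln (1 / \<epsilon>))
      \<in> O[at_right 0](\<lambda>\<epsilon>. (ln (1 / \<epsilon>) / ln (ln (1 / \<epsilon>))) ^ CARD('n) * ln (1 / \<epsilon>))"
    by (rule landau_o.big_mult[OF landau_o.big_power[OF cutoff_bound_bigo] landau_o.big_refl])
  finally show ?thesis unfolding log_power_eq .
qed

theorem theorem6:
  fixes \<sigma> :: real and lam :: "nat \<Rightarrow> real"
  assumes "\<sigma> > 0"
    and "eigenvalue_seq (gaussK \<sigma> :: real^'n \<Rightarrow> real^'n \<Rightarrow> real) cube lam"
  shows "(\<forall>\<theta>. 0 < \<theta> \<and> \<theta> < 1/2 \<longrightarrow>
           (\<lambda>\<epsilon>. Ecal \<epsilon> lam + real (mcount ((1 - \<theta>) * \<epsilon>) lam) * ln (3 / \<theta>))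
             \<in> O[at_right 0](\<lambda>\<epsilon>. ln (1/\<epsilon>) ^ (CARD('n) + 1) / (ln (ln (1/\<epsilon>))) ^ CARD('n)))
       \<and> (\<lambda>\<epsilon>. entropy_C \<epsilon> (rkhs_ball (gaussK \<sigma> :: real^'n \<Rightarrow> real^'n \<Rightarrow> real) cube) cube)
             \<in> O[at_right 0](\<lambda>\<epsilon>. ln (1/\<epsilon>) ^ (CARD('n) + 1) / (ln (ln (1/\<epsilon>))) ^ CARD('n))"
proof -
  show ?thesis
  proof (intro conjI allI impI)
    fix \<theta> :: real
    assume "0 < \<theta> \<and> \<theta> < 1/2"
    then have "(\<lambda>\<epsilon>. real (mcount ((1 - \<theta>) * \<epsilon>) lam) * ln (3 / \<theta>))
        \<in> O[at_right 0](\<lambda>\<epsilon>. ln (1/\<epsilon>) ^ (CARD('n) + 1) / (ln (ln (1/\<epsilon>))) ^ CARD('n))"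
      using mcount_scaled_bigo[OF assms] by (intro cmult_in_bigo_iff'[THEN iffD2] disjI2) blast
    with Ecal_bigo[OF assms] show "(\<lambda>\<epsilon>. Ecal \<epsilon> lam + real (mcount ((1 - \<theta>) * \<epsilon>) lam) * ln (3 / \<theta>))
        \<in> O[at_right 0](\<lambda>\<epsilon>. ln (1/\<epsilon>) ^ (CARD('n) + 1) / (ln (ln (1/\<epsilon>))) ^ CARD('n))"
      by (rule sum_in_bigo(1))
  next
    show "(\<lambda>\<epsilon>. entropy_C \<epsilon> (rkhs_ball (gaussK \<sigma> :: real^'n \<Rightarrow> real^'n \<Rightarrow> real) cube) cube)
        \<in> O[at_right 0](\<lambda>\<epsilon>. ln (1/\<epsilon>) ^ (CARD('n) + 1) / (ln (ln (1/\<epsilon>))) ^ CARD('n))"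
      by (rule entropy_C_gauss_bigo[OF assms(1)])
  qed
qed

end
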